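(* Let $n\ge 2$, let $\Gamma=(\gamma_{i,j})\in\mathcal{M}_n(\mathbb{R})$ be symmetric with entries in $[0,1]$, zero diagonal, and at least one strictly positive off-diagonal entry in each row, such that the weighted graph with weight matrix $\Gamma$ is connected. Let $\boldsymbol{\eta}=\Gamma\mathbf{1}_n$, $L=\operatorname{diag}(\boldsymbol{\eta})-\Gamma$, let $\lambda,\mu>0$, and $A=(a_{i,j})=\lambda\mathsf{I}_n+\mu L$. Let $\mathsf{P}$ be either $\mathsf{P}_a\coloneqq\lambda\mathsf{I}_n+\mu\operatorname{diag}(\boldsymbol{\eta})$ or $\mathsf{P}_b\coloneqq\operatorname{diag}\big([\sum_{j=1}^n a_{i,j}^2]^{1/2}\big)_{i=1,\dots,n}$. Let $X\in\{Q,U\}$, where $Q,U\in\mathcal{M}_n(\mathbb{R})$ are defined by their columns: $Q\mathbf{e}_1=\mathbf{1}_n$, $Q\mathbf{e}_i=\mathbf{e}_1-\mathbf{e}_i$ for $i=2,\dots,n$; and $U\mathbf{e}_1=n^{-1/2}\mathbf{1}_n$, $U\mathbf{e}_k=(k(k-1))^{-1/2}\big(\sum_{j=1}^{k-1}\mathbf{e}_j-(k-1)\mathbf{e}_k\big)$ for $k=2,\dots,n$. Set $A_X\coloneqq X^{-1}AX$, $D_X\coloneqq X^{-1}\mathsf{P}X$, and let $\pi_2(M)\coloneqq M_{2:n,2:n}$ denote the trailing $(n-1)\times(n-1)$ principal submatrix. Then all eigenvalues of $\pi_2(D_X^{-1}A_X)$ are real, its smallest eigenvalue is strictly positive, and every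 eigenvalue $\theta$ of $\pi_2(D_X^{-1}A_X)$ satisfies \[ a(\mathsf{P}^{-1}A)-\frac{\lambda}{\lambda+\mu\min\boldsymbol{\eta}}\le\theta\le\rho(\mathsf{P}^{-1}A) \] as well as $\theta\le\min\big\{2,\ \frac{n}{n-1}\frac{\rho(L)}{a(L)}\big\}$.
   Context: $\mathbf{e}_1,\dots,\mathbf{e}_n$ is the canonical basis, $\mathbf{1}_n$ the all-ones vector, $\mathsf{I}_n$ the identity; $\min\boldsymbol{\eta}$ is the smallest entry of $\boldsymbol{\eta}$. For a matrix $M$ with real eigenvalues $\lambda_1,\dots,\lambda_n$ ordered so that $|\lambda_1|\le\cdots\le|\lambda_n|$, $\rho(M)\coloneqq\lambda_n$ is the spectral radius and $a(M)\coloneqq\lambda_2$ is the algebraic connectivity (for $M=\mathsf{P}^{-1}A$ or $M=L$ the eigenvalues are real and nonnegative, so $a(M)$ is the second smallest eigenvalue counted with multiplicity). *)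

theory Defs
  imports "Jordan_Normal_Form.Char_Poly"
begin

(* Indices are 0-based: mathematical index i corresponds to i-1. *)

definition mat_inv :: "real mat \<Rightarrow> real mat" where
  "mat_inv M = (SOME B. B \<in> carrier_mat (dim_row M) (dim_row M) \<and>
      M * B = 1\<^sub>m (dim_row M) \<and> B * M = 1\<^sub>m (dim_row M))"

definition diag_of :: "nat \<Rightarrow> (nat \<Rightarrow> real) \<Rightarrow> real mat" where
  "diag_of n f = mat n n (\<lambda>(i,j). if i = j then f i else 0)"

definition pi2 :: "real mat \<Rightarrow> real mat" where
  "pi2 M = mat (dim_row M - 1) (dim_col M - 1) (\<lambda>(i,j). M $$ (i+1, j+1))"

definition eig_list :: "real mat \<Rightarrow> real list" where
  "eig_list M = sort_key abs (sorted_list_of_multiset (proots (char_poly M)))"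

definition spec_rad :: "real mat \<Rightarrow> real" where
  "spec_rad M = last (eig_list M)"

definition alg_conn :: "real mat \<Rightarrow> real" where
  "alg_conn M = eig_list M ! 1"

definition Qmat :: "nat \<Rightarrow> real mat" where
  "Qmat n = mat n n (\<lambda>(i,j). if j = 0 then 1
                            else if i = 0 then 1 else if i = j then -1 else 0)"

definition Umat :: "nat \<Rightarrow> real mat" where
  "Umat n = mat n n (\<lambda>(i,j). if j = 0 then 1 / sqrt (real n)
       else (let k = real (j+1) in
             (if i < j then 1 else if i = j then -(k - 1) else 0) / sqrt (k * (k - 1))))"

definition weighted_connected :: "nat \<Rightarrow> real mat \<Rightarrow> bool" where
  "weighted_connected n G = (\<forall>i<n. \<forall>j<n.
      (i, j) \<in> {(p, q). p < n \<and> q < n \<and> G $$ (p, q) > 0}\<^sup>*)"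

end

(*
  Let y = X x, where x is an eigenvector of pi2(D_X^-1 A_X) padded with a leading zero.  The
  first column of X spans the constants and the others sum to zero, so y sums to zero and
  A y = P (beta 1 + theta y).  Pairing this with A y shows that theta is the ratio of
  (A y)^T P^-1 (A y) to y^T A y; both forms are positive since A = lam I + mu L is positive
  definite, and this makes theta real and positive.  In the coordinates u = P^(1/2) y the ratio
  is |B u|^2 / u^T B u for the symmetric B = P^(-1/2) A P^(-1/2), which is similar to P^-1 A;
  the spectral theorem then bounds it by rho(P^-1 A) <= 2, and Courant-Fischer on the plane
  spanned by u and P^(1/2) 1 gives the lower bound.  The last bound compares
  (A y)^T P^-1 (A y) with |A y|^2 / (lam + mu min eta) and uses the Fiedler-type estimate
  (n - 1) a(L) <= n min eta.
*)
theory Submission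
  imports Defs "Jordan_Normal_Form.Schur_Decomposition" "HOL-Analysis.Convex"
begin

text \<open>Vectors are functions \<open>nat \<Rightarrow> real\<close> of which only the entries below \<open>n\<close> matter;
  this keeps the many explicit sums of the argument close to the paper.\<close>

definition dot :: "nat \<Rightarrow> (nat \<Rightarrow> real) \<Rightarrow> (nat \<Rightarrow> real) \<Rightarrow> real" where
  "dot n x y = (\<Sum>i<n. x i * y i)"

definition mulv :: "nat \<Rightarrow> real mat \<Rightarrow> (nat \<Rightarrow> real) \<Rightarrow> nat \<Rightarrow> real" where
  "mulv n S x i = (\<Sum>j<n. S $$ (i, j) * x j)"

definition cmulv :: "nat \<Rightarrow> real mat \<Rightarrow> (nat \<Rightarrow> complex) \<Rightarrow> nat \<Rightarrow> complex" where
  "cmulv n S x i = (\<Sum>j<n. complex_of_real (S $$ (i, j)) * x j)"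

definition sym_mat :: "nat \<Rightarrow> real mat \<Rightarrow> bool" where
  "sym_mat n S \<longleftrightarrow> S \<in> carrier_mat n n \<and> (\<forall>i<n. \<forall>j<n. S $$ (i, j) = S $$ (j, i))"

definition orthonormal :: "nat \<Rightarrow> nat \<Rightarrow> (nat \<Rightarrow> nat \<Rightarrow> real) \<Rightarrow> bool" where
  "orthonormal n k v \<longleftrightarrow> (\<forall>l<k. \<forall>l'<k. dot n (v l) (v l') = (if l = l' then 1 else 0))"

lemma dot_commute: "dot n x y = dot n y x"
  unfolding dot_def by (simp add: mult.commute)

lemma dot_cong: "(\<And>i. i < n \<Longrightarrow> x i = x' i) \<Longrightarrow> (\<And>i. i < n \<Longrightarrow> y i = y' i) \<Longrightarrow> dot n x y = dot n x' y'"
  unfolding dot_def by (intro sum.cong) auto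

lemma dot_scale_right: "dot n x (\<lambda>i. c * y i) = c * dot n x y"
  unfolding dot_def by (simp add: sum_distrib_left mult_ac)

lemma dot_linear_right: "dot n x (\<lambda>i. a * y i + b * z i) = a * dot n x y + b * dot n x z"
  unfolding dot_def by (simp add: distrib_left sum.distrib sum_distrib_left mult_ac)

lemma dot_self_nonneg: "0 \<le> dot n x x"
  unfolding dot_def by (intro sum_nonneg) simp

lemma dot_self_pos:
  assumes "\<exists>i<n. x i \<noteq> 0"
  shows "0 < dot n x x"
proof -
  obtain i where "i < n" "x i \<noteq> 0" using assms by blast
  then show ?thesis
    unfolding dot_def by (intro sum_pos2[of _ i]) (auto simp: zero_less_mult_iff linorder_neq_iff)
qed

lemma mulv_cong: "(\<And>j. j < n \<Longrightarrow> x j = x' j) \<Longrightarrow> mulv n S x i = mulv n S x' i"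
  unfolding mulv_def by (intro sum.cong) auto

lemma mulv_linear: "mulv n S (\<lambda>j. a * x j + b * y j) i = a * mulv n S x i + b * mulv n S y i"
  unfolding mulv_def by (simp add: distrib_left sum.distrib sum_distrib_left mult_ac)

lemma mulv_mult:
  assumes "A \<in> carrier_mat n n" "B \<in> carrier_mat n n" "i < n"
  shows "mulv n (A * B) x i = mulv n A (mulv n B x) i"
proof -
  have "mulv n (A * B) x i = (\<Sum>j<n. \<Sum>k<n. A $$ (i, k) * B $$ (k, j) * x j)"
    using assms unfolding mulv_def
    by (intro sum.cong) (auto simp: scalar_prod_def atLeast0LessThan sum_distrib_right)
  also have "\<dots> = mulv n A (mulv n B x) i"
    unfolding mulv_def by (subst sum.swap) (simp add: sum_distrib_left mult_ac)
  finally show ?thesis .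
qed

lemma mulv_add:
  "A \<in> carrier_mat n n \<Longrightarrow> B \<in> carrier_mat n n \<Longrightarrow> i < n \<Longrightarrow>
    mulv n (A + B) x i = mulv n A x i + mulv n B x i"
  unfolding mulv_def by (simp add: distrib_right sum.distrib)

lemma mulv_minus:
  "A \<in> carrier_mat n n \<Longrightarrow> B \<in> carrier_mat n n \<Longrightarrow> i < n \<Longrightarrow>
    mulv n (A - B) x i = mulv n A x i - mulv n B x i"
  unfolding mulv_def by (simp add: left_diff_distrib sum_subtractf)

lemma mulv_smult: "A \<in> carrier_mat n n \<Longrightarrow> i < n \<Longrightarrow> mulv n (c \<cdot>\<^sub>m A) x i = c * mulv n A x i"
  unfolding mulv_def by (simp add: sum_distrib_left mult_ac)

lemma mulv_one: "i < n \<Longrightarrow> mulv n (1\<^sub>m n) x i = x i"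
  unfolding mulv_def by (simp add: if_distrib[of "\<lambda>a. a * _"] cong: if_cong)

lemma mulv_mult_mat_vec:
  "S \<in> carrier_mat n n \<Longrightarrow> v \<in> carrier_vec n \<Longrightarrow> i < n \<Longrightarrow> mulv n S (\<lambda>j. v $ j) i = (S *\<^sub>v v) $ i"
  unfolding mulv_def by (simp add: scalar_prod_def atLeast0LessThan)

lemma cmulv_mult:
  assumes "A \<in> carrier_mat n n" "B \<in> carrier_mat n n" "i < n"
  shows "cmulv n (A * B) x i = cmulv n A (cmulv n B x) i"
proof -
  have "cmulv n A (cmulv n B x) i = (\<Sum>j<n. \<Sum>k<n. complex_of_real (A $$ (i, k) * B $$ (k, j)) * x j)"
    unfolding cmulv_def sum_distrib_left by (subst sum.swap) (simp add: mult_ac)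
  also have "\<dots> = cmulv n (A * B) x i"
    using assms unfolding cmulv_def
    by (intro sum.cong refl) (simp add: scalar_prod_def atLeast0LessThan sum_distrib_right of_real_sum)
  finally show ?thesis ..
qed

lemma cmulv_one: "i < n \<Longrightarrow> cmulv n (1\<^sub>m n) x i = x i"
  unfolding cmulv_def by (simp add: if_distrib[of complex_of_real] if_distrib[of "\<lambda>a. a * _"] cong: if_cong)

lemma Re_cmulv: "Re (cmulv n S x i) = mulv n S (\<lambda>j. Re (x j)) i"
  and Im_cmulv: "Im (cmulv n S x i) = mulv n S (\<lambda>j. Im (x j)) i"
  unfolding cmulv_def mulv_def by (simp_all add: Re_sum Im_sum)

lemma sym_matD: "sym_mat n S \<Longrightarrow> i < n \<Longrightarrow> j < n \<Longrightarrow> S $$ (i, j) = S $$ (j, i)"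
  unfolding sym_mat_def by blast

lemma sym_mat_carrier: "sym_mat n S \<Longrightarrow> S \<in> carrier_mat n n"
  unfolding sym_mat_def by blast

lemma sym_mat_iff_transpose: "S \<in> carrier_mat n n \<Longrightarrow> sym_mat n S \<longleftrightarrow> transpose_mat S = S"
  unfolding sym_mat_def by (auto simp: mat_eq_iff)

lemma sym_mat_add: "sym_mat n A \<Longrightarrow> sym_mat n B \<Longrightarrow> sym_mat n (A + B)"
  unfolding sym_mat_def by auto

lemma sym_mat_congruence:
  assumes "sym_mat n S" "sym_mat n T"
  shows "sym_mat n (T * S * T)"
proof -
  have S: "S \<in> carrier_mat n n" "transpose_mat S = S"
    and T: "T \<in> carrier_mat n n" "transpose_mat T = T"
    using assms sym_mat_iff_transpose sym_mat_carrier by blast+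
  then have "transpose_mat (T * S * T) = T * S * T"
    by (simp add: transpose_mult[of _ n n _ n] assoc_mult_mat[of _ n n _ n _ n])
  then show ?thesis using S T by (subst sym_mat_iff_transpose) auto
qed

lemma dot_mulv_sym_mat:
  assumes "sym_mat n S"
  shows "dot n y (mulv n S x) = dot n (mulv n S y) x"
proof -
  have "dot n y (mulv n S x) = (\<Sum>i<n. \<Sum>j<n. S $$ (j, i) * y j * x i)"
    unfolding dot_def mulv_def by (subst sum.swap) (simp add: sum_distrib_left mult_ac)
  also have "\<dots> = dot n (mulv n S y) x"
    using sym_matD[OF assms] unfolding dot_def mulv_def
    by (intro sum.cong) (auto simp: sum_distrib_left sum_distrib_right mult_ac)
  finally show ?thesis .
qed

lemma dot_unit_left: "i < n \<Longrightarrow> dot n (\<lambda>j. if j = i then 1 else 0) x = x i"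
  unfolding dot_def by (simp add: if_distrib[of "\<lambda>a. a * _"] cong: if_cong)

lemma mulv_unit: "i < n \<Longrightarrow> mulv n S (\<lambda>j. if j = i then 1 else 0) k = S $$ (k, i)"
  unfolding mulv_def by (simp add: if_distrib[of "\<lambda>a. _ * a"] cong: if_cong)

lemma diag_of_carrier: "diag_of n f \<in> carrier_mat n n"
  unfolding diag_of_def by simp

lemma diag_of_mult:
  assumes "M \<in> carrier_mat n m"
  shows "diag_of n f * M = mat n m (\<lambda>(i, j). f i * M $$ (i, j))"
  using assms unfolding diag_of_def
  by (intro eq_matI) (auto simp: scalar_prod_def atLeast0LessThan if_distrib[of "\<lambda>a. a * _"] cong: if_cong)

lemma mult_diag_of:
  assumes "M \<in> carrier_mat m n"
  shows "M * diag_of n f = mat m n (\<lambda>(i, j). M $$ (i, j) * f j)"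
  using assms unfolding diag_of_def
  by (intro eq_matI) (auto simp: scalar_prod_def atLeast0LessThan if_distrib[of "\<lambda>a. _ * a"] cong: if_cong)

lemma mat_inv_unique:
  assumes "M \<in> carrier_mat n n" "B \<in> carrier_mat n n" "M * B = 1\<^sub>m n" "B * M = 1\<^sub>m n"
  shows "mat_inv M = B"
proof -
  let ?inverse = "\<lambda>B. B \<in> carrier_mat n n \<and> M * B = 1\<^sub>m n \<and> B * M = 1\<^sub>m n"
  have "?inverse (mat_inv M)"
    unfolding mat_inv_def using assms by (simp add: carrier_matD) (rule someI, blast)
  then have inv: "mat_inv M \<in> carrier_mat n n" "mat_inv M * M = 1\<^sub>m n" by auto
  then have "mat_inv M = mat_inv M * (M * B)" using assms(3) by simp
  also have "\<dots> = B"
    using inv assms(1,2) by (simp add: assoc_mult_mat[symmetric, of _ n n M n B n])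
  finally show ?thesis .
qed

lemma mat_inv_left_inverse:
  assumes "M \<in> carrier_mat n n" "Y \<in> carrier_mat n n" "Y * M = 1\<^sub>m n"
  shows "mat_inv M = Y" "M * Y = 1\<^sub>m n"
proof -
  show "M * Y = 1\<^sub>m n" using mat_mult_left_right_inverse[OF assms(2,1,3)] .
  then show "mat_inv M = Y" using mat_inv_unique assms by blast
qed

lemma mat_inv_conjugate_mult:
  assumes X: "X \<in> carrier_mat n n" "Y \<in> carrier_mat n n" "Y * X = 1\<^sub>m n"
    and P: "P \<in> carrier_mat n n" "Q \<in> carrier_mat n n" "Q * P = 1\<^sub>m n"
    and A: "A \<in> carrier_mat n n"
  shows "mat_inv (mat_inv X * P * X) * (mat_inv X * A * X) = mat_inv X * (mat_inv P * A) * X"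
proof -
  note XY = mat_inv_left_inverse[OF X] and PQ = mat_inv_left_inverse[OF P]
  note simps = assoc_mult_mat[of _ n n _ n _ n] mult_carrier_mat[of _ n n _ n]
  have "(Y * P * X) * (Y * Q * X) = 1\<^sub>m n"
  proof -
    have "(Y * P * X) * (Y * Q * X) = Y * (P * (X * Y) * Q) * X" using X P by (simp add: simps)
    then show ?thesis using X P XY PQ by simp
  qed
  then have "mat_inv (Y * P * X) = Y * Q * X"
    using X P by (intro mat_inv_left_inverse(1)) (auto intro: mat_mult_left_right_inverse)
  moreover have "Y * Q * X * (Y * A * X) = Y * (Q * A) * X"
  proof -
    have "Y * Q * X * (Y * A * X) = Y * Q * (X * Y) * A * X" using X P A by (simp add: simps)
    then show ?thesis using X P A XY by (simp add: simps)
  qed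
  ultimately show ?thesis using XY PQ by simp
qed

lemma diag_of_left_inverse:
  assumes "\<And>i. i < n \<Longrightarrow> p i \<noteq> 0"
  shows "diag_of n (\<lambda>i. 1 / p i) * diag_of n p = 1\<^sub>m n"
  using assms by (simp add: diag_of_mult[OF diag_of_carrier]) (auto simp: diag_of_def)

lemma diag_of_inverse:
  assumes "\<And>i. i < n \<Longrightarrow> p i \<noteq> 0"
  shows "mat_inv (diag_of n p) = diag_of n (\<lambda>i. 1 / p i)"
  by (rule mat_inv_left_inverse(1)[OF diag_of_carrier diag_of_carrier diag_of_left_inverse[OF assms]])

section \<open>The spectral theorem for real symmetric matrices\<close>

definition trace :: "'a::comm_ring_1 mat \<Rightarrow> 'a" where
  "trace A = (\<Sum>i<dim_row A. A $$ (i, i))"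

lemma trace_add: "A \<in> carrier_mat n n \<Longrightarrow> B \<in> carrier_mat n n \<Longrightarrow> trace (A + B) = trace A + trace B"
  unfolding trace_def by (simp add: sum.distrib)

lemma trace_smult: "A \<in> carrier_mat n n \<Longrightarrow> trace (c \<cdot>\<^sub>m A) = c * trace A"
  unfolding trace_def by (simp add: sum_distrib_left)

lemma trace_mult_commute:
  assumes "A \<in> carrier_mat n n" "B \<in> carrier_mat n n"
  shows "trace (A * B) = trace (B * A)"
proof -
  have "trace (A * B) = (\<Sum>i<n. \<Sum>k<n. A $$ (i, k) * B $$ (k, i))"
    using assms unfolding trace_def by (intro sum.cong) (auto simp: scalar_prod_def atLeast0LessThan)
  also have "\<dots> = (\<Sum>k<n. \<Sum>i<n. B $$ (k, i) * A $$ (i, k))"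
    by (subst sum.swap) (simp add: mult.commute)
  also have "\<dots> = trace (B * A)"
    using assms unfolding trace_def by (intro sum.cong) (auto simp: scalar_prod_def atLeast0LessThan)
  finally show ?thesis .
qed

lemma trace_similar_mat_wit:
  assumes "similar_mat_wit A B P Q" "A \<in> carrier_mat n n"
  shows "trace A = trace B"
proof -
  note wit = similar_mat_witD2[OF assms(2,1)]
  have "trace A = trace ((P * B) * Q)"
    using wit by simp
  also have "\<dots> = trace (Q * (P * B))"
    using wit by (intro trace_mult_commute) auto
  also have "Q * (P * B) = B"
    using wit by (simp add: assoc_mult_mat[symmetric, of Q n n P n B n])
  finally show ?thesis .
qed

lemma trace_eq_sum_roots:
  fixes A :: "complex mat"
  assumes A: "A \<in> carrier_mat n n" and cp: "char_poly A = (\<Prod>a\<leftarrow>as. [:- a, 1:])"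
  shows "trace A = sum_list as"
proof -
  obtain B P Q where "schur_decomposition A as = (B, P, Q)"
    by (cases "schur_decomposition A as") auto
  from schur_decomposition[OF A cp this]
  have sim: "similar_mat_wit A B P Q" and diag: "diag_mat B = as" by auto
  have B: "B \<in> carrier_mat n n" using similar_mat_witD2(5)[OF A sim] .
  have "trace A = trace B" by (rule trace_similar_mat_wit[OF sim A])
  also have "\<dots> = sum_list as"
    using B diag unfolding trace_def diag_mat_def
    by (auto simp: sum_list_sum_nth atLeast0LessThan)
  finally show ?thesis .
qed

lemma eigenvalue_of_real_iff:
  assumes "S \<in> carrier_mat n n"
  shows "eigenvalue (map_mat complex_of_real S) (complex_of_real e) \<longleftrightarrow> eigenvalue S e"
  using assms
  by (simp add: eigenvalue_root_char_poly of_real_hom.char_poly_hom)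

lemma hermitian_form_of_sym_mat:
  fixes y :: "nat \<Rightarrow> complex"
  assumes "sym_mat n S"
  defines "re \<equiv> \<lambda>i. Re (y i)" and "im \<equiv> \<lambda>i. Im (y i)"
  shows "(\<Sum>i<n. cnj (y i) * cmulv n S y i)
    = complex_of_real (dot n re (mulv n S re) + dot n im (mulv n S im))"
  unfolding cmulv_def
proof (rule complex_eqI)
  have "dot n im (mulv n S re) = dot n re (mulv n S im)"
    using dot_mulv_sym_mat[OF assms(1), of im re] by (simp add: dot_commute)
  then show "Im (\<Sum>i<n. cnj (y i) * (\<Sum>j<n. complex_of_real (S $$ (i, j)) * y j))
    = Im (complex_of_real (dot n re (mulv n S re) + dot n im (mulv n S im)))"
    by (simp add: dot_def mulv_def re_def im_def sum_subtractf sum_distrib_left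
        algebra_simps)
qed (simp add: dot_def mulv_def re_def im_def sum.distrib sum_distrib_left algebra_simps)

lemma sym_mat_eigenvalue_real:
  assumes S: "sym_mat n S" and ev: "eigenvalue (map_mat complex_of_real S) a"
  shows "Im a = 0"
proof -
  have SC: "map_mat complex_of_real S \<in> carrier_mat n n"
    using sym_mat_carrier[OF S] by simp
  obtain v where v: "v \<in> carrier_vec n" "v \<noteq> 0\<^sub>v n" "map_mat complex_of_real S *\<^sub>v v = a \<cdot>\<^sub>v v"
    using ev SC unfolding eigenvalue_def eigenvector_def by auto
  have Sv: "cmulv n S (($) v) i = a * v $ i" if "i < n" for i
    using arg_cong[OF v(3), of "\<lambda>w. w $ i"] that v(1) sym_mat_carrier[OF S]
    by (simp add: cmulv_def scalar_prod_def atLeast0LessThan)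
  define w where "w = (\<Sum>i<n. (cmod (v $ i))\<^sup>2)"
  obtain i where i: "i < n" "v $ i \<noteq> 0"
    using v(1,2) by (metis carrier_vecD eq_vecI index_zero_vec(1,2))
  have w_pos: "w > 0"
    unfolding w_def using i by (intro sum_pos2[of _ i]) auto
  obtain r where "complex_of_real r = (\<Sum>i<n. cnj (v $ i) * cmulv n S (($) v) i)"
    using hermitian_form_of_sym_mat[OF S] by metis
  also have "\<dots> = (\<Sum>i<n. cnj (v $ i) * (a * v $ i))"
    by (intro sum.cong refl) (simp add: Sv)
  also have "\<dots> = (\<Sum>i<n. a * complex_of_real ((cmod (v $ i))\<^sup>2))"
    by (simp add: complex_norm_square[simplified] mult_ac)
  also have "\<dots> = a * complex_of_real w"
    unfolding w_def of_real_sum by (simp add: sum_distrib_left)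
  finally have "Im (a * complex_of_real w) = 0" by (metis Im_complex_of_real)
  then show ?thesis using w_pos by simp
qed

lemma sym_mat_eigenvalue_ne:
  assumes S: "sym_mat n S" and tr: "trace S \<noteq> real n * c"
  obtains e where "e \<noteq> c" "eigenvalue S e"
proof -
  let ?SC = "map_mat complex_of_real S"
  have SC: "?SC \<in> carrier_mat n n"
    using sym_mat_carrier[OF S] by simp
  obtain as where cp: "char_poly ?SC = (\<Prod>a\<leftarrow>as. [:- a, 1:])" and len: "length as = n"
    using char_poly_factorized[OF SC] by blast
  have sum_as: "sum_list as = complex_of_real (trace S)"
    using trace_eq_sum_roots[OF SC cp] sym_mat_carrier[OF S] by (simp add: trace_def)
  obtain a where a: "a \<in> set as" "a \<noteq> complex_of_real c"
  proof (rule ccontr)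
    assume "\<not> thesis"
    then have "as = replicate n (complex_of_real c)"
      using that len by (metis replicate_length_same)
    then have "complex_of_real (trace S) = complex_of_real (real n * c)"
      using sum_as by (simp add: sum_list_replicate)
    then have "trace S = real n * c"
      by (rule of_real_eq_iff[THEN iffD1])
    with tr show False ..
  qed
  have ev: "eigenvalue ?SC a"
    using eigenvalue_root_char_poly[OF SC] cp a(1) by (simp add: poly_prod_list_zero_iff)
  moreover have "a = complex_of_real (Re a)"
    using sym_mat_eigenvalue_real[OF S ev] by (simp add: complex_eqI)
  ultimately have "eigenvalue S (Re a)"
    using eigenvalue_of_real_iff[OF sym_mat_carrier[OF S]] by metis
  moreover have "Re a \<noteq> c"
    using a(2) \<open>a = complex_of_real (Re a)\<close> by metis
  ultimately show ?thesis using that by blast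
qed

lemma eigenvalue_unit_eigenvector:
  assumes S: "S \<in> carrier_mat n n" and ev: "eigenvalue S e"
  obtains x where "dot n x x = 1" "\<And>i. i < n \<Longrightarrow> mulv n S x i = e * x i"
proof -
  obtain v where v: "v \<in> carrier_vec n" "v \<noteq> 0\<^sub>v n" "S *\<^sub>v v = e \<cdot>\<^sub>v v"
    using ev S unfolding eigenvalue_def eigenvector_def by auto
  have "\<exists>i<n. v $ i \<noteq> 0"
    using v(1,2) by (metis carrier_vecD eq_vecI index_zero_vec(1,2))
  then have pos: "dot n (($) v) (($) v) > 0" by (rule dot_self_pos)
  define r where "r = sqrt (dot n (($) v) (($) v))"
  have r: "r > 0" "r * r = dot n (($) v) (($) v)"
    unfolding r_def using pos by auto
  show ?thesis
  proof
    show "dot n (\<lambda>i. v $ i / r) (\<lambda>i. v $ i / r) = 1"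
      using r pos unfolding dot_def by (simp add: sum_divide_distrib[symmetric])
    fix i assume i: "i < n"
    have "mulv n S (\<lambda>j. v $ j / r) i = mulv n S (($) v) i / r"
      unfolding mulv_def by (simp add: sum_divide_distrib)
    also have "\<dots> = e * (v $ i / r)"
      using mulv_mult_mat_vec[OF S v(1) i] v(3) i v(1) by simp
    finally show "mulv n S (\<lambda>j. v $ j / r) i = e * (v $ i / r)" .
  qed
qed

definition span_projector :: "nat \<Rightarrow> nat \<Rightarrow> (nat \<Rightarrow> nat \<Rightarrow> real) \<Rightarrow> real mat" where
  "span_projector n k v = mat n n (\<lambda>(i, j). \<Sum>l<k. v l i * v l j)"

lemma span_projector_carrier: "span_projector n k v \<in> carrier_mat n n"
  unfolding span_projector_def by simp

lemma sym_mat_span_projector: "sym_mat n (span_projector n k v)"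
  unfolding span_projector_def sym_mat_def by (simp add: mult.commute)

lemma mulv_span_projector:
  assumes "i < n"
  shows "mulv n (span_projector n k v) x i = (\<Sum>l<k. dot n (v l) x * v l i)"
proof -
  have "mulv n (span_projector n k v) x i = (\<Sum>j<n. \<Sum>l<k. v l i * v l j * x j)"
    using assms unfolding span_projector_def mulv_def by (simp add: sum_distrib_right)
  also have "\<dots> = (\<Sum>l<k. dot n (v l) x * v l i)"
    unfolding dot_def by (subst sum.swap) (simp add: sum_distrib_left sum_distrib_right mult_ac)
  finally show ?thesis .
qed

lemma mulv_span_projector_member:
  assumes "orthonormal n k v" "l < k" "i < n"
  shows "mulv n (span_projector n k v) (v l) i = v l i"
proof -
  have "mulv n (span_projector n k v) (v l) i = (\<Sum>l'<k. if l' = l then v l' i else 0)"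
    unfolding mulv_span_projector[OF assms(3)] using assms(1,2) unfolding orthonormal_def
    by (intro sum.cong) auto
  then show ?thesis using assms(2) by simp
qed

lemma trace_span_projector:
  assumes "orthonormal n k v"
  shows "trace (span_projector n k v) = real k"
proof -
  have "trace (span_projector n k v) = (\<Sum>l<k. dot n (v l) (v l))"
    unfolding span_projector_def trace_def dot_def by (simp add: sum.swap[of _ "{..<k}"])
  then show ?thesis using assms unfolding orthonormal_def by simp
qed

text \<open>This compression is the device of the induction step of the spectral theorem.  With \<open>R\<close> the
  projector onto the span of orthonormal eigenvectors \<open>v\<close>, it acts as \<open>c\<close> on that span and as \<open>S\<close>
  on its orthogonal complement; for \<open>trace \<noteq> n c\<close> it has an eigenvalue \<open>e \<noteq> c\<close>, whose
  eigenvectors are then orthogonal to the span and hence eigenvectors of \<open>S\<close>.\<close>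

definition compression :: "nat \<Rightarrow> nat \<Rightarrow> (nat \<Rightarrow> nat \<Rightarrow> real) \<Rightarrow> real mat \<Rightarrow> real \<Rightarrow> real mat" where
  "compression n k v S c = (1\<^sub>m n - span_projector n k v) * S * (1\<^sub>m n - span_projector n k v)
    + c \<cdot>\<^sub>m span_projector n k v"

lemma sym_mat_compression:
  assumes "sym_mat n S"
  shows "sym_mat n (compression n k v S c)"
proof -
  have "sym_mat n (1\<^sub>m n - span_projector n k v)"
    using sym_mat_span_projector[of n k v] span_projector_carrier[of n k v]
    unfolding sym_mat_def by auto
  moreover have "sym_mat n (c \<cdot>\<^sub>m span_projector n k v)"
    using sym_mat_span_projector[of n k v] unfolding sym_mat_def by auto
  ultimately show ?thesis
    unfolding compression_def by (intro sym_mat_add sym_mat_congruence assms)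
qed

lemma mulv_compression:
  fixes k :: nat and v :: "nat \<Rightarrow> nat \<Rightarrow> real"
  assumes S: "S \<in> carrier_mat n n" and i: "i < n"
  defines "Pr \<equiv> 1\<^sub>m n - span_projector n k v"
  shows "mulv n (compression n k v S c) x i
    = mulv n Pr (mulv n S (mulv n Pr x)) i + c * mulv n (span_projector n k v) x i"
proof -
  have Pr: "Pr \<in> carrier_mat n n" unfolding Pr_def using span_projector_carrier[of n k v] by auto
  have "mulv n (compression n k v S c) x i = mulv n Pr (mulv n (S * Pr) x) i + c * mulv n (span_projector n k v) x i"
    using i S Pr span_projector_carrier[of n k v] unfolding compression_def Pr_def[symmetric]
    by (simp add: mulv_add mulv_smult mulv_mult assoc_mult_mat[of _ n n _ n _ n])
  also have "mulv n Pr (mulv n (S * Pr) x) i = mulv n Pr (mulv n S (mulv n Pr x)) i"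
    using S Pr by (intro mulv_cong) (simp add: mulv_mult)
  finally show ?thesis .
qed

lemma mulv_complement_projector:
  "i < n \<Longrightarrow> mulv n (1\<^sub>m n - span_projector n k v) x i = x i - (\<Sum>l<k. dot n (v l) x * v l i)"
  using span_projector_carrier[of n k v] by (simp add: mulv_minus mulv_one mulv_span_projector)

lemma mulv_compression_member:
  assumes S: "S \<in> carrier_mat n n" and v: "orthonormal n k v" and "l < k" "i < n"
  shows "mulv n (compression n k v S c) (v l) i = c * v l i"
proof -
  have "mulv n (1\<^sub>m n - span_projector n k v) (v l) j = 0" if "j < n" for j
    using mulv_span_projector_member[OF v \<open>l < k\<close> that] that span_projector_carrier[of n k v]
    by (simp add: mulv_minus mulv_one)
  then have "mulv n S (mulv n (1\<^sub>m n - span_projector n k v) (v l)) j = 0" for j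
    using mulv_cong[of n "mulv n (1\<^sub>m n - span_projector n k v) (v l)" "\<lambda>_. 0" S j]
    by (simp add: mulv_def)
  then have "mulv n (1\<^sub>m n - span_projector n k v)
      (mulv n S (mulv n (1\<^sub>m n - span_projector n k v) (v l))) i = 0"
    by (simp add: mulv_def)
  then show ?thesis
    using assms by (simp add: mulv_compression mulv_span_projector_member)
qed

lemma mulv_compression_orthogonal:
  assumes S: "sym_mat n S" and orth: "\<And>l. l < k \<Longrightarrow> dot n (v l) x = 0"
    and eig: "\<And>l i. l < k \<Longrightarrow> i < n \<Longrightarrow> mulv n S (v l) i = d l * v l i" and i: "i < n"
  shows "mulv n (compression n k v S c) x i = mulv n S x i"
proof -
  have "dot n (v l) (mulv n S x) = 0" if "l < k" for l
  proof -
    have "dot n (v l) (mulv n S x) = dot n (\<lambda>j. d l * v l j) x"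
      unfolding dot_mulv_sym_mat[OF S] using that by (intro dot_cong) (simp_all add: eig)
    then show ?thesis
      using orth[OF that] by (simp add: dot_commute[of n _ x] dot_scale_right)
  qed
  moreover have "mulv n S (mulv n (1\<^sub>m n - span_projector n k v) x) = mulv n S x"
    by (intro ext mulv_cong) (simp add: mulv_complement_projector orth)
  ultimately show ?thesis
    using i sym_mat_carrier[OF S]
    by (simp add: mulv_compression mulv_complement_projector mulv_span_projector orth)
qed

lemma trace_compression:
  fixes k :: nat and v :: "nat \<Rightarrow> nat \<Rightarrow> real"
  assumes "S \<in> carrier_mat n n" "orthonormal n k v"
  defines "Pr \<equiv> 1\<^sub>m n - span_projector n k v"
  shows "trace (compression n k v S c) = trace (Pr * S * Pr) + c * real k"
proof -
  have "trace (compression n k v S c) = trace (Pr * S * Pr) + trace (c \<cdot>\<^sub>m span_projector n k v)"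
    unfolding compression_def Pr_def[symmetric] using assms span_projector_carrier[of n k v]
    by (intro trace_add) auto
  then show ?thesis
    using trace_smult[OF span_projector_carrier, of c n k v] trace_span_projector[OF assms(2)] by simp
qed

lemma orthonormal_eigenvectors_extend:
  assumes S: "sym_mat n S" and k: "k < n" and v: "orthonormal n k v"
    and eig: "\<And>l i. l < k \<Longrightarrow> i < n \<Longrightarrow> mulv n S (v l) i = d l * v l i"
  obtains x e where "dot n x x = 1" "\<And>l. l < k \<Longrightarrow> dot n (v l) x = 0"
    "\<And>i. i < n \<Longrightarrow> mulv n S x i = e * x i"
proof -
  define t where "t = trace ((1\<^sub>m n - span_projector n k v) * S * (1\<^sub>m n - span_projector n k v))"
  define c where "c = t / (real n - real k) + 1"
  define N where "N = compression n k v S c"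
  have S_carrier: "S \<in> carrier_mat n n" using sym_mat_carrier[OF S] .
  have N_sym: "sym_mat n N" unfolding N_def by (rule sym_mat_compression[OF S])
  have "real n * c - trace N = (real n - real k) * c - t"
    unfolding N_def trace_compression[OF S_carrier v] t_def by (simp add: algebra_simps)
  also have "\<dots> = real n - real k"
    using k unfolding c_def by (simp add: field_simps)
  finally have "trace N \<noteq> real n * c" using k by simp
  then obtain e where "e \<noteq> c" "eigenvalue N e"
    by (rule sym_mat_eigenvalue_ne[OF N_sym])
  moreover obtain x where x: "dot n x x = 1" and Nx: "\<And>i. i < n \<Longrightarrow> mulv n N x i = e * x i"
    using eigenvalue_unit_eigenvector[OF sym_mat_carrier[OF N_sym] \<open>eigenvalue N e\<close>] by blast
  moreover have orth: "dot n (v l) x = 0" if "l < k" for l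
  proof -
    have "e * dot n (v l) x = dot n (v l) (mulv n N x)"
      by (simp add: dot_cong[OF _ Nx] dot_scale_right)
    also have "\<dots> = dot n (mulv n N (v l)) x" by (rule dot_mulv_sym_mat[OF N_sym])
    also have "\<dots> = dot n (\<lambda>i. c * v l i) x"
      unfolding N_def using that by (intro dot_cong) (simp_all add: mulv_compression_member[OF S_carrier v])
    also have "\<dots> = c * dot n (v l) x"
      by (simp add: dot_commute[of n _ x] dot_scale_right)
    finally show ?thesis using \<open>e \<noteq> c\<close> by simp
  qed
  moreover have "mulv n S x i = e * x i" if "i < n" for i
    using Nx[OF that] mulv_compression_orthogonal[OF S orth eig that] unfolding N_def by simp
  ultimately show thesis using that by blast
qed

theorem sym_mat_orthonormal_eigenbasis:
  assumes S: "sym_mat n S"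
  obtains v d where "orthonormal n n v" "\<And>l i. l < n \<Longrightarrow> i < n \<Longrightarrow> mulv n S (v l) i = d l * v l i"
proof -
  have "\<exists>v d. orthonormal n k v \<and> (\<forall>l<k. \<forall>i<n. mulv n S (v l) i = d l * v l i)" if "k \<le> n" for k
    using that
  proof (induction k)
    case 0
    show ?case unfolding orthonormal_def by auto
  next
    case (Suc k)
    then obtain v d where v: "orthonormal n k v" and eig: "\<forall>l<k. \<forall>i<n. mulv n S (v l) i = d l * v l i"
      by auto
    obtain x e where x: "dot n x x = 1" "\<And>l. l < k \<Longrightarrow> dot n (v l) x = 0"
      and Sx: "\<And>i. i < n \<Longrightarrow> mulv n S x i = e * x i"
      using orthonormal_eigenvectors_extend[OF S _ v] eig Suc.prems by (metis Suc_le_lessD)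
    have "orthonormal n (Suc k) (v(k := x))"
      using v x unfolding orthonormal_def by (auto simp: less_Suc_eq dot_commute)
    moreover have "\<forall>l<Suc k. \<forall>i<n. mulv n S ((v(k := x)) l) i = (d(k := e)) l * (v(k := x)) l i"
      using eig Sx by (auto simp: less_Suc_eq)
    ultimately show ?case by blast
  qed
  then show thesis using that by blast
qed

section \<open>Rayleigh quotients of positive semidefinite matrices\<close>

lemma proots_linear_factors: "proots (\<Prod>a\<leftarrow>xs. [:- a, 1:]) = mset (xs :: real list)"
proof (induction xs)
  case (Cons a xs)
  have "(\<Prod>a\<leftarrow>xs. [:- a, 1:]) \<noteq> (0 :: real poly)" by (auto simp: prod_list_zero_iff)
  then have "proots (\<Prod>a\<leftarrow>a # xs. [:- a, 1:]) = proots [:- a, 1:] + proots (\<Prod>a\<leftarrow>xs. [:- a, 1:])"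
    by (simp only: list.map prod_list.Cons) (rule proots_mult, simp_all)
  then show ?case using Cons.IH by (simp del: pCons_eq_iff)
qed simp

locale eigenbasis =
  fixes n :: nat and S :: "real mat" and v :: "nat \<Rightarrow> nat \<Rightarrow> real" and d :: "nat \<Rightarrow> real"
  assumes carrier: "S \<in> carrier_mat n n"
    and orthonormal: "orthonormal n n v"
    and eigen: "\<And>l i. l < n \<Longrightarrow> i < n \<Longrightarrow> mulv n S (v l) i = d l * v l i"
begin

definition V :: "real mat" where
  "V = mat n n (\<lambda>(i, l). v l i)"

lemma V_carrier: "V \<in> carrier_mat n n" and transpose_V_carrier: "transpose_mat V \<in> carrier_mat n n"
  unfolding V_def by auto

lemma transpose_V_V: "transpose_mat V * V = 1\<^sub>m n"
  using orthonormal unfolding orthonormal_def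
  by (intro eq_matI) (auto simp: V_def scalar_prod_def dot_def atLeast0LessThan)

lemma V_transpose_V: "V * transpose_mat V = 1\<^sub>m n"
  using mat_mult_left_right_inverse[OF transpose_V_carrier V_carrier transpose_V_V] .

lemma completeness: "i < n \<Longrightarrow> j < n \<Longrightarrow> (\<Sum>l<n. v l i * v l j) = (if i = j then 1 else 0)"
  using arg_cong[OF V_transpose_V, of "\<lambda>M. M $$ (i, j)"]
  by (simp add: V_def scalar_prod_def atLeast0LessThan)

lemma expansion:
  assumes "i < n"
  shows "x i = (\<Sum>l<n. dot n (v l) x * v l i)"
proof -
  have "(\<Sum>l<n. dot n (v l) x * v l i) = (\<Sum>j<n. (\<Sum>l<n. v l i * v l j) * x j)"
    unfolding dot_def sum_distrib_right by (subst sum.swap) (simp add: mult_ac)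
  also have "\<dots> = x i"
    using assms by (simp add: completeness if_distrib[of "\<lambda>a. a * _"] cong: if_cong)
  finally show ?thesis by simp
qed

lemma mulv_expansion: "i < n \<Longrightarrow> mulv n S x i = (\<Sum>l<n. d l * dot n (v l) x * v l i)"
proof -
  assume i: "i < n"
  have "mulv n S x i = (\<Sum>j<n. S $$ (i, j) * (\<Sum>l<n. dot n (v l) x * v l j))"
    unfolding mulv_def by (intro sum.cong refl) (simp flip: expansion)
  also have "\<dots> = (\<Sum>l<n. dot n (v l) x * mulv n S (v l) i)"
    unfolding mulv_def sum_distrib_left by (subst sum.swap) (simp add: mult_ac)
  also have "\<dots> = (\<Sum>l<n. d l * dot n (v l) x * v l i)"
    using i by (simp add: eigen mult_ac)
  finally show ?thesis .
qed

lemma dot_expansion: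
  assumes "\<And>i. i < n \<Longrightarrow> x i = (\<Sum>l<n. a l * v l i)" "\<And>i. i < n \<Longrightarrow> y i = (\<Sum>l<n. b l * v l i)"
  shows "dot n x y = (\<Sum>l<n. a l * b l)"
proof -
  have "dot n x y = (\<Sum>i<n. \<Sum>l<n. \<Sum>l'<n. a l * b l' * (v l i * v l' i))"
    using assms unfolding dot_def by (simp add: sum_product mult_ac)
  also have "\<dots> = (\<Sum>l<n. \<Sum>l'<n. a l * b l' * dot n (v l) (v l'))"
    unfolding dot_def sum_distrib_left by (subst sum.swap) (intro sum.cong refl sum.swap)
  also have "\<dots> = (\<Sum>l<n. \<Sum>l'<n. if l' = l then a l * b l' else 0)"
    using orthonormal unfolding orthonormal_def by (intro sum.cong refl) auto
  also have "\<dots> = (\<Sum>l<n. a l * b l)" by simp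
  finally show ?thesis .
qed

abbreviation coord :: "(nat \<Rightarrow> real) \<Rightarrow> nat \<Rightarrow> real" where
  "coord x l \<equiv> dot n (v l) x"

lemma norm_expansion: "dot n x x = (\<Sum>l<n. (coord x l)\<^sup>2)"
proof -
  have "dot n x x = (\<Sum>l<n. coord x l * coord x l)"
    by (rule dot_expansion) (rule expansion, assumption)+
  then show ?thesis by (simp add: power2_eq_square)
qed

lemma quadratic_form_expansion: "dot n x (mulv n S x) = (\<Sum>l<n. d l * (coord x l)\<^sup>2)"
proof -
  have "dot n x (mulv n S x) = (\<Sum>l<n. coord x l * (d l * coord x l))"
    by (rule dot_expansion) (simp_all only: expansion[symmetric] mulv_expansion mult.assoc)
  then show ?thesis by (simp add: power2_eq_square mult_ac)
qed

lemma norm_mulv_expansion: "dot n (mulv n S x) (mulv n S x) = (\<Sum>l<n. (d l)\<^sup>2 * (coord x l)\<^sup>2)"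
proof -
  have "dot n (mulv n S x) (mulv n S x) = (\<Sum>l<n. (d l * coord x l) * (d l * coord x l))"
    by (rule dot_expansion) (simp_all only: mulv_expansion mult.assoc)
  then show ?thesis by (simp add: power2_eq_square mult_ac)
qed

lemma char_poly_eq: "char_poly S = (\<Prod>a\<leftarrow>map d [0..<n]. [:- a, 1:])"
proof -
  define D where "D = mat n n (\<lambda>(i, j). if i = j then d i else 0)"
  have D: "D \<in> carrier_mat n n" unfolding D_def by simp
  have SV: "S * V = V * D"
    using carrier by (intro eq_matI)
      (auto simp: V_def D_def scalar_prod_def atLeast0LessThan eigen[unfolded mulv_def]
        if_distrib[of "\<lambda>a. _ * a"] cong: if_cong)
  have "S = S * V * transpose_mat V"
    using carrier V_carrier transpose_V_carrier
    by (simp add: assoc_mult_mat[of S n n V n "transpose_mat V" n] V_transpose_V)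
  then have "S = V * D * transpose_mat V" unfolding SV .
  then have "similar_mat S D"
    using carrier D V_carrier transpose_V_carrier V_transpose_V transpose_V_V
    by (intro similar_matI[of S D V "transpose_mat V" n]) auto
  then have "char_poly S = char_poly D" by (rule char_poly_similar)
  also have "\<dots> = (\<Prod>a\<leftarrow>diag_mat D. [:- a, 1:])"
    by (rule char_poly_upper_triangular[OF D]) (auto simp: D_def upper_triangular_def)
  also have "diag_mat D = map d [0..<n]" by (simp add: diag_mat_def D_def)
  finally show ?thesis .
qed

lemma eig_list_eq:
  assumes "sorted (map d [0..<n])" "\<And>l. l < n \<Longrightarrow> 0 \<le> d l"
  shows "eig_list S = map d [0..<n]"
proof -
  have "eig_list S = sort_key abs (sort (map d [0..<n]))"
    unfolding eig_list_def char_poly_eq proots_linear_factors sorted_list_of_multiset_mset ..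
  also have "sort (map d [0..<n]) = map d [0..<n]"
    by (rule sorted_sort_id[OF assms(1)])
  also have "sort_key abs (map d [0..<n]) = map d [0..<n]"
  proof (rule sort_key_id_if_sorted)
    have "map abs (map d [0..<n]) = map d [0..<n]" using assms(2) by simp
    then show "sorted (map abs (map d [0..<n]))" using assms(1) by (simp only:)
  qed
  finally show ?thesis .
qed

lemma rayleigh_eigenvector: "l < n \<Longrightarrow> dot n (v l) (mulv n S (v l)) = d l"
  using orthonormal unfolding orthonormal_def
  by (simp add: dot_cong[of n "v l" "v l" "mulv n S (v l)" "\<lambda>i. d l * v l i"] eigen dot_scale_right)

lemma eigenvalue_nonneg_if_psd: "(\<And>x. 0 \<le> dot n x (mulv n S x)) \<Longrightarrow> l < n \<Longrightarrow> 0 \<le> d l"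
  using rayleigh_eigenvector by metis

end

definition psd :: "nat \<Rightarrow> real mat \<Rightarrow> bool" where
  "psd n S \<longleftrightarrow> sym_mat n S \<and> (\<forall>x. 0 \<le> dot n x (mulv n S x))"

locale sorted_eigenbasis = eigenbasis +
  assumes sorted: "sorted (map d [0..<n])"
    and nonneg: "\<And>l. l < n \<Longrightarrow> 0 \<le> d l"
begin

lemma eigenvalue_mono: "l \<le> l' \<Longrightarrow> l' < n \<Longrightarrow> d l \<le> d l'"
  using sorted by (auto simp: sorted_iff_nth_mono)

lemma quadratic_form_le_top:
  assumes "0 < n"
  shows "dot n x (mulv n S x) \<le> d (n - 1) * dot n x x"
proof -
  have "d l * (coord x l)\<^sup>2 \<le> d (n - 1) * (coord x l)\<^sup>2" if "l < n" for l
    using that by (intro mult_right_mono eigenvalue_mono) auto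
  then show ?thesis
    unfolding quadratic_form_expansion norm_expansion sum_distrib_left by (intro sum_mono) simp
qed

lemma norm_mulv_le_top:
  assumes "0 < n"
  shows "dot n (mulv n S x) (mulv n S x) \<le> d (n - 1) * dot n x (mulv n S x)"
proof -
  have "(d l)\<^sup>2 * (coord x l)\<^sup>2 \<le> d (n - 1) * (d l * (coord x l)\<^sup>2)" if "l < n" for l
  proof -
    have "d l * (d l * (coord x l)\<^sup>2) \<le> d (n - 1) * (d l * (coord x l)\<^sup>2)"
      using that nonneg[OF that] by (intro mult_right_mono eigenvalue_mono) auto
    then show ?thesis by (simp add: power2_eq_square mult.assoc)
  qed
  then show ?thesis
    unfolding quadratic_form_expansion norm_mulv_expansion sum_distrib_left by (intro sum_mono) simp
qed

lemma second_eigenvalue_le: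
  assumes "coord t 0 = 0"
  shows "d 1 * dot n t t \<le> dot n t (mulv n S t)"
    and "d 1 * dot n t (mulv n S t) \<le> dot n (mulv n S t) (mulv n S t)"
proof -
  have low: "d 1 * (coord t l)\<^sup>2 \<le> d l * (coord t l)\<^sup>2" if "l < n" for l
  proof (cases "l = 0")
    case False
    then show ?thesis using that by (intro mult_right_mono[OF eigenvalue_mono zero_le_power2]) auto
  qed (simp add: assms)
  show "d 1 * dot n t t \<le> dot n t (mulv n S t)"
    unfolding quadratic_form_expansion norm_expansion sum_distrib_left
    by (intro sum_mono low) simp
  show "d 1 * dot n t (mulv n S t) \<le> dot n (mulv n S t) (mulv n S t)"
  proof -
    have "d 1 * (d l * (coord t l)\<^sup>2) \<le> (d l)\<^sup>2 * (coord t l)\<^sup>2" if "l < n" for l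
    proof -
      have "d l * (d 1 * (coord t l)\<^sup>2) \<le> d l * (d l * (coord t l)\<^sup>2)"
        using low[OF that] nonneg[OF that] by (rule mult_left_mono)
      then show ?thesis by (simp add: power2_eq_square mult_ac)
    qed
    then show ?thesis
      unfolding quadratic_form_expansion norm_mulv_expansion sum_distrib_left by (intro sum_mono) simp
  qed
qed

end

lemma psd_sorted_eigenbasis:
  assumes psd: "psd n S"
  obtains v d where "sorted_eigenbasis n S v d" "eig_list S = map d [0..<n]"
proof -
  have S: "sym_mat n S" using psd unfolding psd_def by blast
  obtain v d where v: "orthonormal n n v" and eig: "\<And>l i. l < n \<Longrightarrow> i < n \<Longrightarrow> mulv n S (v l) i = d l * v l i"
    using sym_mat_orthonormal_eigenbasis[OF S] by blast
  define ps where "ps = sort_key d [0..<n]"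
  have ps: "distinct ps" "length ps = n" "\<And>l. l < n \<Longrightarrow> ps ! l < n"
    unfolding ps_def by (auto simp: nth_mem[of _ "sort_key d [0..<n]", simplified])
  interpret sorted: eigenbasis n S "\<lambda>l. v (ps ! l)" "\<lambda>l. d (ps ! l)"
  proof
    show "S \<in> carrier_mat n n" using sym_mat_carrier[OF S] .
    show "orthonormal n n (\<lambda>l. v (ps ! l))"
      using v ps unfolding orthonormal_def by (simp add: nth_eq_iff_index_eq)
  qed (simp add: eig ps(3))
  have "map (\<lambda>l. d (ps ! l)) [0..<n] = map d (map ((!) ps) [0..<length ps])"
    using ps(2) by simp
  then have "map (\<lambda>l. d (ps ! l)) [0..<n] = map d ps"
    by (simp only: map_nth)
  then have sorted: "sorted (map (\<lambda>l. d (ps ! l)) [0..<n])"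
    unfolding ps_def by simp
  have nonneg: "\<And>l. l < n \<Longrightarrow> 0 \<le> d (ps ! l)"
    using sorted.eigenvalue_nonneg_if_psd psd that unfolding psd_def by blast
  have "sorted_eigenbasis n S (\<lambda>l. v (ps ! l)) (\<lambda>l. d (ps ! l))"
    by unfold_locales (use sorted nonneg in auto)
  from that[OF this sorted.eig_list_eq[OF sorted nonneg]] show thesis .
qed

lemma orthogonal_in_plane:
  obtains a b :: real where "a \<noteq> 0 \<or> b \<noteq> 0" "dot n w (\<lambda>i. a * x i + b * y i) = 0"
proof (cases "dot n w x = 0 \<and> dot n w y = 0")
  case True
  then show thesis using that[of 1 0] by (simp add: dot_linear_right)
next
  case False
  have "dot n w (\<lambda>i. dot n w y * x i + - dot n w x * y i) = 0"
    unfolding dot_linear_right by (simp add: mult.commute)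
  with False show thesis
    using that[of "dot n w y" "- dot n w x"] by auto
qed

lemma spec_rad_eq: "0 < n \<Longrightarrow> eig_list S = map d [0..<n] \<Longrightarrow> spec_rad S = d (n - 1)"
  unfolding spec_rad_def by (simp add: last_map)

lemma alg_conn_eq: "2 \<le> n \<Longrightarrow> eig_list S = map d [0..<n] \<Longrightarrow> alg_conn S = d 1"
  unfolding alg_conn_def by simp

lemma psd_quadratic_form_le_spec_rad:
  assumes "psd n S" "0 < n"
  shows "dot n x (mulv n S x) \<le> spec_rad S * dot n x x"
proof -
  obtain v d where v: "sorted_eigenbasis n S v d" and eig: "eig_list S = map d [0..<n]"
    using psd_sorted_eigenbasis[OF assms(1)] .
  interpret sorted_eigenbasis n S v d by (fact v)
  show ?thesis
    using quadratic_form_le_top[OF assms(2)] unfolding spec_rad_eq[OF assms(2) eig] .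
qed

lemma psd_norm_mulv_le_spec_rad:
  assumes "psd n S" "0 < n"
  shows "dot n (mulv n S x) (mulv n S x) \<le> spec_rad S * dot n x (mulv n S x)"
proof -
  obtain v d where v: "sorted_eigenbasis n S v d" and eig: "eig_list S = map d [0..<n]"
    using psd_sorted_eigenbasis[OF assms(1)] .
  interpret sorted_eigenbasis n S v d by (fact v)
  show ?thesis
    using norm_mulv_le_top[OF assms(2)] unfolding spec_rad_eq[OF assms(2) eig] .
qed

lemma psd_spec_rad_attained:
  assumes "psd n S" "0 < n"
  obtains x where "dot n x x = 1" "dot n x (mulv n S x) = spec_rad S"
proof -
  obtain v d where v: "sorted_eigenbasis n S v d" and eig: "eig_list S = map d [0..<n]"
    using psd_sorted_eigenbasis[OF assms(1)] .
  interpret sorted_eigenbasis n S v d by (fact v)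
  have "dot n (v (n - 1)) (v (n - 1)) = 1"
    using orthonormal assms(2) unfolding orthonormal_def by simp
  moreover have "dot n (v (n - 1)) (mulv n S (v (n - 1))) = spec_rad S"
    using rayleigh_eigenvector[of "n - 1"] assms(2) spec_rad_eq[OF assms(2) eig] by simp
  ultimately show thesis by (rule that)
qed

lemma psd_alg_conn_le_in_plane:
  assumes "psd n S" "2 \<le> n"
  obtains t where "\<exists>a b. (a \<noteq> 0 \<or> b \<noteq> 0) \<and> t = (\<lambda>i. a * x i + b * y i)"
    "alg_conn S * dot n t t \<le> dot n t (mulv n S t)"
    "alg_conn S * dot n t (mulv n S t) \<le> dot n (mulv n S t) (mulv n S t)"
proof -
  obtain v d where v: "sorted_eigenbasis n S v d" and eig: "eig_list S = map d [0..<n]"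
    using psd_sorted_eigenbasis[OF assms(1)] .
  interpret sorted_eigenbasis n S v d by (fact v)
  obtain a b where ab: "a \<noteq> 0 \<or> b \<noteq> 0" "dot n (v 0) (\<lambda>i. a * x i + b * y i) = 0"
    using orthogonal_in_plane .
  show thesis
    using that[of "\<lambda>i. a * x i + b * y i"] ab second_eigenvalue_le[OF ab(2)]
    unfolding alg_conn_eq[OF assms(2) eig] by blast
qed

lemma psd_alg_conn_nonneg:
  assumes "psd n S" "2 \<le> n"
  shows "0 \<le> alg_conn S"
proof -
  obtain v d where v: "sorted_eigenbasis n S v d" and eig: "eig_list S = map d [0..<n]"
    using psd_sorted_eigenbasis[OF assms(1)] .
  interpret sorted_eigenbasis n S v d by (fact v)
  show ?thesis using nonneg[of 1] assms(2) unfolding alg_conn_eq[OF assms(2) eig] by simp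
qed

lemma psd_alg_conn_zero_kernel:
  assumes "psd n S" "2 \<le> n" "alg_conn S = 0"
  obtains y z where "dot n y y = 1" "dot n z z = 1" "dot n y z = 0"
    "\<And>i. i < n \<Longrightarrow> mulv n S y i = 0" "\<And>i. i < n \<Longrightarrow> mulv n S z i = 0"
proof -
  obtain v d where v: "sorted_eigenbasis n S v d" and eig: "eig_list S = map d [0..<n]"
    using psd_sorted_eigenbasis[OF assms(1)] .
  interpret sorted_eigenbasis n S v d by (fact v)
  have "d 1 = 0" using assms(3) alg_conn_eq[OF assms(2) eig] by simp
  moreover have "d 0 = 0" using eigenvalue_mono[of 0 1] nonneg[of 0] assms(2) calculation by simp
  ultimately show thesis
    using that[of "v 0" "v 1"] orthonormal eigen assms(2) unfolding orthonormal_def by simp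
qed

section \<open>Weighted graph Laplacians\<close>

locale weighted_graph =
  fixes n :: nat and G :: "real mat" and eta :: "nat \<Rightarrow> real" and L :: "real mat"
  assumes n2: "2 \<le> n"
    and G_carrier: "G \<in> carrier_mat n n"
    and G_sym: "\<forall>i<n. \<forall>j<n. G $$ (i, j) = G $$ (j, i)"
    and G_nonneg: "\<forall>i<n. \<forall>j<n. 0 \<le> G $$ (i, j)"
    and G_diag: "\<forall>i<n. G $$ (i, i) = 0"
    and G_rows: "\<forall>i<n. \<exists>j<n. j \<noteq> i \<and> G $$ (i, j) > 0"
    and G_conn: "weighted_connected n G"
    and eta_def: "eta = (\<lambda>i. \<Sum>j<n. G $$ (i, j))"
    and L_def: "L = diag_of n eta - G"
begin

lemma eta_eq: "eta i = (\<Sum>j<n. G $$ (i, j))"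
  unfolding eta_def ..

lemma L_carrier: "L \<in> carrier_mat n n"
  unfolding L_def by (rule minus_carrier_mat[OF G_carrier])

lemma L_entry: "i < n \<Longrightarrow> j < n \<Longrightarrow> L $$ (i, j) = (if i = j then eta i else 0) - G $$ (i, j)"
  using G_carrier unfolding L_def diag_of_def by simp

lemma mulv_L: "i < n \<Longrightarrow> mulv n L x i = eta i * x i - (\<Sum>j<n. G $$ (i, j) * x j)"
  unfolding mulv_def by (simp add: L_entry left_diff_distrib sum_subtractf
      if_distrib[of "\<lambda>a. a * _"] cong: if_cong)

lemma sym_mat_L: "sym_mat n L"
  unfolding sym_mat_def using L_carrier G_sym by (simp add: L_entry)

lemma eta_pos:
  assumes "i < n"
  shows "0 < eta i"
proof -
  obtain j where "j < n" "G $$ (i, j) > 0" using G_rows assms by blast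
  then show ?thesis using G_nonneg assms unfolding eta_eq by (intro sum_pos2[of _ j]) auto
qed

lemma Min_eta_le: "i < n \<Longrightarrow> Min (eta ` {..<n}) \<le> eta i"
  by simp

lemma Min_eta_attained: obtains i where "i < n" "Min (eta ` {..<n}) = eta i"
proof -
  have "0 \<in> {..<n}" using n2 by simp
  then have "Min (eta ` {..<n}) \<in> eta ` {..<n}" by (intro Min_in) auto
  then show thesis using that by auto
qed

lemma Min_eta_pos: "0 < Min (eta ` {..<n})"
proof -
  obtain i where "i < n" "Min (eta ` {..<n}) = eta i" by (rule Min_eta_attained)
  then show ?thesis using eta_pos by simp
qed

lemma weighted_sum_swap: "(\<Sum>i<n. \<Sum>j<n. G $$ (i, j) * f j) = (\<Sum>i<n. eta i * f i)"
proof -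
  have "(\<Sum>i<n. \<Sum>j<n. G $$ (i, j) * f j) = (\<Sum>j<n. \<Sum>i<n. G $$ (j, i) * f j)"
    using G_sym by (subst sum.swap) (intro sum.cong refl, simp)
  then show ?thesis unfolding eta_def by (simp add: sum_distrib_right)
qed

lemma quadratic_form_L_cross:
  "dot n x (mulv n L x) = (\<Sum>i<n. eta i * (x i)\<^sup>2) - (\<Sum>i<n. \<Sum>j<n. G $$ (i, j) * (x i * x j))"
  unfolding dot_def
  by (simp add: mulv_L right_diff_distrib sum_subtractf sum_distrib_left power2_eq_square mult_ac)

lemma edge_sum_square:
  "(\<Sum>i<n. \<Sum>j<n. G $$ (i, j) * (x i + c * x j)\<^sup>2)
     = 2 * (\<Sum>i<n. eta i * (x i)\<^sup>2) + 2 * c * (\<Sum>i<n. \<Sum>j<n. G $$ (i, j) * (x i * x j))"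
  if "c\<^sup>2 = 1"
proof -
  have "G $$ (i, j) * (x i + c * x j)\<^sup>2
      = G $$ (i, j) * (x i)\<^sup>2 + G $$ (i, j) * (x j)\<^sup>2 + 2 * c * (G $$ (i, j) * (x i * x j))" for i j
    using that by (simp add: power2_eq_square algebra_simps)
  then show ?thesis
    by (simp add: sum.distrib sum_distrib_left weighted_sum_swap sum_distrib_right[symmetric]
        flip: eta_eq)
qed

text \<open>The Laplacian form is \<open>\<Sum> G\<^sub>i\<^sub>j (x\<^sub>i - x\<^sub>j)\<^sup>2 / 2\<close>; its signless counterpart with
  \<open>(x\<^sub>i + x\<^sub>j)\<^sup>2\<close> is nonnegative as well, which bounds the form by twice the degree form.\<close>

lemma quadratic_form_L: "dot n x (mulv n L x) = (\<Sum>i<n. \<Sum>j<n. G $$ (i, j) * (x i - x j)\<^sup>2) / 2"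
  using edge_sum_square[of "-1" x] by (simp add: quadratic_form_L_cross)

lemma quadratic_form_L_le: "dot n x (mulv n L x) \<le> 2 * (\<Sum>i<n. eta i * (x i)\<^sup>2)"
proof -
  have "0 \<le> (\<Sum>i<n. \<Sum>j<n. G $$ (i, j) * (x i + 1 * x j)\<^sup>2)"
    using G_nonneg by (intro sum_nonneg) auto
  then show ?thesis using edge_sum_square[of 1 x] by (simp add: quadratic_form_L_cross)
qed

lemma psd_L: "psd n L"
  unfolding psd_def quadratic_form_L using sym_mat_L G_nonneg
  by (auto intro!: sum_nonneg divide_nonneg_pos)

lemma mulv_L_const: "i < n \<Longrightarrow> mulv n L (\<lambda>_. c) i = 0"
  by (simp add: mulv_L eta_def sum_distrib_right)

lemma L_column_sum: "j < n \<Longrightarrow> (\<Sum>i<n. L $$ (i, j)) = 0"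
  using sym_matD[OF sym_mat_L] mulv_L_const[of j 1] by (simp add: mulv_def)

lemma L_kernel_const:
  assumes "\<And>i. i < n \<Longrightarrow> mulv n L x i = 0" "i < n"
  shows "x i = x 0"
proof -
  have "(\<Sum>i<n. \<Sum>j<n. G $$ (i, j) * (x i - x j)\<^sup>2) = 0"
    using quadratic_form_L[of x] assms(1) unfolding dot_def by simp
  moreover have nonneg: "0 \<le> G $$ (a, b) * (x a - x b)\<^sup>2" if "a < n" "b < n" for a b
    using G_nonneg that by simp
  ultimately have rows: "\<forall>a\<in>{..<n}. (\<Sum>b<n. G $$ (a, b) * (x a - x b)\<^sup>2) = 0"
    by (subst (asm) sum_nonneg_eq_0_iff) (auto intro: sum_nonneg)
  have zero: "G $$ (a, b) * (x a - x b)\<^sup>2 = 0" if "a < n" "b < n" for a b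
  proof -
    have "(\<Sum>b<n. G $$ (a, b) * (x a - x b)\<^sup>2) = 0" using rows that by blast
    then show ?thesis using that nonneg[OF that(1)] by (subst (asm) sum_nonneg_eq_0_iff) auto
  qed
  have "(0, i) \<in> {(a, b). a < n \<and> b < n \<and> G $$ (a, b) > 0}\<^sup>*"
    using G_conn assms(2) n2 unfolding weighted_connected_def by auto
  then show ?thesis
  proof (induction rule: rtrancl_induct)
    case (step y z)
    then have "x y = x z" using zero[of y z] by auto
    then show ?case using step.IH by simp
  qed simp
qed

lemma alg_conn_L_pos: "0 < alg_conn L"
proof -
  have "alg_conn L \<noteq> 0"
  proof
    assume "alg_conn L = 0"
    then obtain y z where yz: "dot n y y = 1" "dot n z z = 1" "dot n y z = 0"
      "\<And>i. i < n \<Longrightarrow> mulv n L y i = 0" "\<And>i. i < n \<Longrightarrow> mulv n L z i = 0"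
      using psd_alg_conn_zero_kernel[OF psd_L n2] by blast
    have "dot n y z = dot n (\<lambda>_. y 0) (\<lambda>_. z 0)"
      "dot n y y = dot n (\<lambda>_. y 0) (\<lambda>_. y 0)" "dot n z z = dot n (\<lambda>_. z 0) (\<lambda>_. z 0)"
      by (intro dot_cong L_kernel_const yz(4,5); assumption)+
    then show False using yz(1-3) by (auto simp: dot_def)
  qed
  then show ?thesis using psd_alg_conn_nonneg[OF psd_L n2] by simp
qed

lemma quadratic_form_L_unit: "i < n \<Longrightarrow> dot n (\<lambda>j. if j = i then 1 else 0) (mulv n L (\<lambda>j. if j = i then 1 else 0)) = eta i"
  using G_diag by (simp add: dot_unit_left mulv_unit L_entry)

lemma eta_le_spec_rad_L:
  assumes "i < n"
  shows "eta i \<le> spec_rad L"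
  using psd_quadratic_form_le_spec_rad[OF psd_L, of "\<lambda>j. if j = i then 1 else 0"] n2 assms
  unfolding quadratic_form_L_unit[OF assms] by (simp add: dot_unit_left)

lemma quadratic_forms_L_plane:
  assumes i: "i < n"
  defines "e \<equiv> \<lambda>j. if j = i then 1 else 0"
  shows "dot n (\<lambda>j. a * 1 + b * e j) (mulv n L (\<lambda>j. a * 1 + b * e j)) = b\<^sup>2 * eta i"
    and "dot n (\<lambda>j. a * 1 + b * e j) (\<lambda>j. a * 1 + b * e j) = real n * a\<^sup>2 + 2 * a * b + b\<^sup>2"
proof -
  define t where "t = (\<lambda>j. a * 1 + b * e j)"
  have sum_e: "(\<Sum>j<n. e j) = 1" and e_i: "e i = 1" using i by (simp_all add: e_def)
  have "dot n t (mulv n L t) = dot n (\<lambda>j. b * L $$ (j, i)) t"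
    using mulv_linear[of n L a "\<lambda>_. 1" b e] mulv_L_const
    by (subst dot_commute, intro dot_cong) (simp_all add: t_def e_def mulv_unit[OF i])
  also have "\<dots> = a * (b * (\<Sum>j<n. L $$ (j, i))) + b * (b * L $$ (i, i))"
    unfolding t_def dot_linear_right dot_commute[of n _ e] dot_unit_left[OF i, folded e_def]
    by (simp add: dot_def sum_distrib_left)
  also have "\<dots> = b\<^sup>2 * eta i"
    using i G_diag by (simp only: L_column_sum[OF i]) (simp add: L_entry power2_eq_square)
  finally show "dot n t (mulv n L t) = b\<^sup>2 * eta i" unfolding t_def .
  have "dot n t e = t i"
    using dot_unit_left[OF i, of t] by (simp add: e_def dot_commute)
  then have "dot n t e = a + b" by (simp add: t_def e_i)
  moreover have "dot n t (\<lambda>_. 1) = real n * a + b"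
  proof -
    have "(\<Sum>j<n. b * e j) = b" using sum_e by (simp flip: sum_distrib_left)
    then show ?thesis unfolding t_def dot_def by (simp add: sum.distrib)
  qed
  moreover have "dot n t t = a * dot n t (\<lambda>_. 1) + b * dot n t e"
    by (rule dot_linear_right[of n t a "\<lambda>_. 1" b e, folded t_def])
  ultimately show "dot n t t = real n * a\<^sup>2 + 2 * a * b + b\<^sup>2"
    unfolding t_def by (simp add: power2_eq_square algebra_simps)
qed

text \<open>Courant--Fischer on the plane spanned by \<open>1\<close> and a unit vector \<open>e\<^sub>i\<close>.\<close>

lemma fiedler_bound:
  assumes i: "i < n"
  shows "(real n - 1) * alg_conn L \<le> real n * eta i"
proof -
  define e :: "nat \<Rightarrow> real" where "e = (\<lambda>j. if j = i then 1 else 0)"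
  obtain t where "\<exists>a b. (a \<noteq> 0 \<or> b \<noteq> 0) \<and> t = (\<lambda>j. a * 1 + b * e j)"
    and ineq: "alg_conn L * dot n t t \<le> dot n t (mulv n L t)"
    and "alg_conn L * dot n t (mulv n L t) \<le> dot n (mulv n L t) (mulv n L t)"
    by (rule psd_alg_conn_le_in_plane[OF psd_L n2, of "\<lambda>_. 1" e])
  then obtain a b where ab: "a \<noteq> 0 \<or> b \<noteq> 0" and t: "t = (\<lambda>j. a * 1 + b * e j)" by auto
  have tLt: "dot n t (mulv n L t) = b\<^sup>2 * eta i"
    and tt: "dot n t t = real n * a\<^sup>2 + 2 * a * b + b\<^sup>2"
    unfolding t e_def by (rule quadratic_forms_L_plane[OF i])+
  have pos: "0 < alg_conn L" by (rule alg_conn_L_pos)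
  have "b \<noteq> 0"
  proof
    assume "b = 0"
    then have "0 < alg_conn L * (real n * a\<^sup>2)" using ab pos n2 by simp
    then show False using ineq \<open>b = 0\<close> by (simp add: tt tLt)
  qed
  have "real n * dot n t t - (real n - 1) * b\<^sup>2 = (real n * a + b)\<^sup>2"
    by (simp add: tt power2_eq_square algebra_simps)
  then have "(real n - 1) * b\<^sup>2 \<le> real n * dot n t t"
    using zero_le_power2[of "real n * a + b"] by linarith
  then have "(real n - 1) * alg_conn L * b\<^sup>2 \<le> real n * (alg_conn L * dot n t t)"
    using pos by (simp add: mult_left_mono mult_ac)
  also have "\<dots> \<le> real n * (b\<^sup>2 * eta i)"
    using ineq unfolding tLt by (rule mult_left_mono) simp
  finally show ?thesis using \<open>b \<noteq> 0\<close> by (simp add: mult_ac)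
qed

lemma Min_eta_le_spec_rad_L: "Min (eta ` {..<n}) \<le> spec_rad L"
proof -
  obtain i where "i < n" "Min (eta ` {..<n}) = eta i" by (rule Min_eta_attained)
  then show ?thesis using eta_le_spec_rad_L by simp
qed

lemma spec_rad_div_Min_eta_le:
  "spec_rad L / Min (eta ` {..<n}) \<le> real n / (real n - 1) * (spec_rad L / alg_conn L)"
proof -
  obtain i where i: "i < n" "Min (eta ` {..<n}) = eta i" by (rule Min_eta_attained)
  have "0 \<le> spec_rad L" using eta_le_spec_rad_L[OF i(1)] eta_pos[OF i(1)] by simp
  then have "spec_rad L * ((real n - 1) * alg_conn L) \<le> spec_rad L * (real n * eta i)"
    using fiedler_bound[OF i(1)] by (rule mult_left_mono[rotated])
  then show ?thesis
    using i eta_pos[OF i(1)] alg_conn_L_pos n2 by (simp add: field_simps)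
qed

end

section \<open>The regularized Laplacian and its diagonal preconditioners\<close>

locale regularized_laplacian = weighted_graph +
  fixes lam mu :: real and A :: "real mat"
  assumes lam_pos: "0 < lam" and mu_pos: "0 < mu"
    and A_def: "A = lam \<cdot>\<^sub>m 1\<^sub>m n + mu \<cdot>\<^sub>m L"
begin

lemma A_carrier: "A \<in> carrier_mat n n"
  unfolding A_def using L_carrier by simp

lemma A_entry: "i < n \<Longrightarrow> j < n \<Longrightarrow> A $$ (i, j) = (if i = j then lam else 0) + mu * L $$ (i, j)"
  unfolding A_def using L_carrier by simp

lemma mulv_A: "i < n \<Longrightarrow> mulv n A x i = lam * x i + mu * mulv n L x i"
  unfolding A_def using L_carrier by (simp add: mulv_add mulv_smult mulv_one)

lemma sym_mat_A: "sym_mat n A"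
  using A_carrier sym_matD[OF sym_mat_L] unfolding sym_mat_def by (simp add: A_entry)

lemma quadratic_form_A: "dot n x (mulv n A x) = lam * dot n x x + mu * dot n x (mulv n L x)"
  unfolding dot_def by (simp add: mulv_A distrib_left sum.distrib sum_distrib_left mult_ac)

lemma quadratic_form_A_pos: "\<exists>i<n. x i \<noteq> 0 \<Longrightarrow> 0 < dot n x (mulv n A x)"
  unfolding quadratic_form_A using dot_self_pos lam_pos mu_pos psd_L unfolding psd_def
  by (simp add: add_pos_nonneg)

lemma psd_A: "psd n A"
  unfolding psd_def quadratic_form_A using sym_mat_A lam_pos mu_pos psd_L dot_self_nonneg
  unfolding psd_def by simp

lemma mulv_A_const: "i < n \<Longrightarrow> mulv n A (\<lambda>_. c) i = lam * c"
  by (simp add: mulv_A mulv_L_const)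

lemma A_column_sum: "j < n \<Longrightarrow> (\<Sum>i<n. A $$ (i, j)) = lam"
  by (simp add: A_entry sum.distrib L_column_sum flip: sum_distrib_left)

lemma sum_mulv_A: "(\<Sum>i<n. mulv n A x i) = lam * (\<Sum>i<n. x i)"
proof -
  have "(\<Sum>i<n. mulv n A x i) = (\<Sum>j<n. (\<Sum>i<n. A $$ (i, j)) * x j)"
    unfolding mulv_def by (subst sum.swap) (simp add: sum_distrib_right)
  then show ?thesis by (simp add: A_column_sum sum_distrib_left)
qed

lemma A_diagonal: "i < n \<Longrightarrow> A $$ (i, i) = lam + mu * eta i"
  using G_diag by (simp add: A_entry L_entry)

lemma norm_mulv_A_le: "(\<Sum>i<n. (mulv n A x i)\<^sup>2) \<le> (lam + mu * spec_rad L) * dot n x (mulv n A x)"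
proof -
  define xx xLx LL where "xx = dot n x x" and "xLx = dot n x (mulv n L x)"
    and "LL = dot n (mulv n L x) (mulv n L x)"
  have "0 \<le> lam * mu * (spec_rad L * xx - xLx)" "0 \<le> mu\<^sup>2 * (spec_rad L * xLx - LL)"
    unfolding xx_def xLx_def LL_def
    using psd_quadratic_form_le_spec_rad[OF psd_L, of x] psd_norm_mulv_le_spec_rad[OF psd_L, of x]
      n2 lam_pos mu_pos by simp_all
  moreover have "(\<Sum>i<n. (mulv n A x i)\<^sup>2) = lam\<^sup>2 * xx + 2 * lam * mu * xLx + mu\<^sup>2 * LL"
    unfolding xx_def xLx_def LL_def dot_def
    by (simp add: mulv_A power2_eq_square algebra_simps sum.distrib sum_distrib_left)
  moreover have "dot n x (mulv n A x) = lam * xx + mu * xLx"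
    unfolding xx_def xLx_def by (rule quadratic_form_A)
  ultimately show ?thesis by (simp add: power2_eq_square algebra_simps)
qed

lemma diagonal_preconditioner:
  assumes "P = diag_of n (\<lambda>i. lam + mu * eta i) \<or> P = diag_of n (\<lambda>i. sqrt (\<Sum>j<n. (A $$ (i, j))\<^sup>2))"
  obtains p where "P = diag_of n p" "\<forall>i<n. lam + mu * eta i \<le> p i"
proof -
  have "lam + mu * eta i \<le> sqrt (\<Sum>j<n. (A $$ (i, j))\<^sup>2)" if "i < n" for i
  proof -
    have "(A $$ (i, i))\<^sup>2 \<le> (\<Sum>j<n. (A $$ (i, j))\<^sup>2)"
      using that by (intro member_le_sum) auto
    then have "\<bar>A $$ (i, i)\<bar> \<le> sqrt (\<Sum>j<n. (A $$ (i, j))\<^sup>2)"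
      using real_sqrt_le_mono by fastforce
    then show ?thesis using A_diagonal[OF that] by simp
  qed
  then show thesis using assms that by auto
qed

end

locale preconditioned_laplacian = regularized_laplacian +
  fixes p :: "nat \<Rightarrow> real"
  assumes p_ge: "\<forall>i<n. lam + mu * eta i \<le> p i"
begin

lemma p_pos:
  assumes "i < n"
  shows "0 < p i"
proof -
  have "0 < lam + mu * eta i" using lam_pos mu_pos eta_pos[OF assms] by (simp add: add_pos_pos)
  also have "\<dots> \<le> p i" using p_ge assms by simp
  finally show ?thesis .
qed

text \<open>\<open>C = P\<^sup>-\<^sup>1 A\<close> is similar to the symmetric matrix \<open>B = P\<^sup>-\<^sup>1\<^sup>/\<^sup>2 A P\<^sup>-\<^sup>1\<^sup>/\<^sup>2\<close>, through which
  its spectrum is controlled by Rayleigh quotients.\<close>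

definition C :: "real mat" where
  "C = mat n n (\<lambda>(i, j). A $$ (i, j) / p i)"

definition B :: "real mat" where
  "B = mat n n (\<lambda>(i, j). A $$ (i, j) / (sqrt (p i) * sqrt (p j)))"

lemma sqrt_p_pos: "i < n \<Longrightarrow> 0 < sqrt (p i)"
  using p_pos by simp

lemma p_nonzero: "i < n \<Longrightarrow> p i \<noteq> 0"
  using p_pos by fastforce

lemma mulv_B: "i < n \<Longrightarrow> mulv n B x i = mulv n A (\<lambda>j. x j / sqrt (p j)) i / sqrt (p i)"
  unfolding mulv_def B_def by (simp add: sum_divide_distrib mult.commute)

lemma quadratic_form_B:
  "dot n x (mulv n B x) = dot n (\<lambda>j. x j / sqrt (p j)) (mulv n A (\<lambda>j. x j / sqrt (p j)))"
  unfolding dot_def by (intro sum.cong refl) (simp add: mulv_B)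

lemma psd_B: "psd n B"
proof -
  have "sym_mat n B"
    unfolding sym_mat_def B_def using sym_matD[OF sym_mat_A] by (simp add: mult.commute)
  then show ?thesis
    using psd_A unfolding psd_def quadratic_form_B by blast
qed

lemma eig_list_C: "eig_list C = eig_list B"
proof -
  define D D' where "D = diag_of n (\<lambda>i. 1 / sqrt (p i))" and "D' = diag_of n (\<lambda>i. sqrt (p i))"
  have carriers: "C \<in> carrier_mat n n" "B \<in> carrier_mat n n" "D \<in> carrier_mat n n" "D' \<in> carrier_mat n n"
    unfolding C_def B_def D_def D'_def diag_of_def by auto
  have "D * D' = 1\<^sub>m n" and "D' * D = 1\<^sub>m n"
    unfolding D_def D'_def
    by (simp_all add: diag_of_mult[OF diag_of_carrier])
      (auto intro!: eq_matI simp: diag_of_def p_nonzero)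
  note inverse = this
  have "D * B = mat n n (\<lambda>(i, j). 1 / sqrt (p i) * B $$ (i, j))"
    unfolding D_def by (rule diag_of_mult[OF carriers(2)])
  then have "D * B * D' = mat n n (\<lambda>(i, j). 1 / sqrt (p i) * B $$ (i, j) * sqrt (p j))"
    unfolding D'_def by (subst mult_diag_of[of _ n n]) (auto intro!: eq_matI)
  then have "C = D * B * D'"
    by (intro eq_matI) (auto simp: C_def B_def p_pos p_nonzero abs_of_pos field_simps)
  then have "similar_mat C B"
    using carriers inverse by (intro similar_matI[of C B D D' n]) auto
  then show ?thesis unfolding eig_list_def by (simp add: char_poly_similar)
qed

lemma quadratic_form_B_le: "dot n x (mulv n B x) \<le> 2 * dot n x x"
proof -
  define w where "w = (\<lambda>j. x j / sqrt (p j))"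
  have "dot n x (mulv n B x) = lam * dot n w w + mu * dot n w (mulv n L w)"
    unfolding quadratic_form_B quadratic_form_A w_def ..
  also have "\<dots> \<le> lam * dot n w w + mu * (2 * (\<Sum>i<n. eta i * (w i)\<^sup>2))"
    using quadratic_form_L_le[of w] mu_pos by simp
  also have "\<dots> = (\<Sum>i<n. (lam + 2 * mu * eta i) * (w i)\<^sup>2)"
    unfolding dot_def sum_distrib_left sum.distrib[symmetric]
    by (intro sum.cong refl) (simp add: power2_eq_square algebra_simps)
  also have "\<dots> \<le> (\<Sum>i<n. 2 * p i * (w i)\<^sup>2)"
    using p_ge lam_pos by (intro sum_mono mult_right_mono) auto
  also have "\<dots> = 2 * dot n x x"
    unfolding dot_def w_def sum_distrib_left
    by (intro sum.cong refl) (simp add: power_divide p_pos less_imp_le power2_eq_square p_nonzero)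
  finally show ?thesis .
qed

lemma spec_rad_B_le: "spec_rad B \<le> 2"
proof -
  obtain x where "dot n x x = 1" "dot n x (mulv n B x) = spec_rad B"
    using psd_spec_rad_attained[OF psd_B] n2 by auto
  then show ?thesis using quadratic_form_B_le[of x] by simp
qed

end

section \<open>Deflated eigenpairs\<close>

lemma le_add_if_square_le_four_mult:
  fixes w a b :: real
  assumes "w\<^sup>2 \<le> 4 * a * b" "0 \<le> a" "0 \<le> b"
  shows "w \<le> a + b"
proof (rule power2_le_imp_le)
  have "4 * a * b \<le> (a + b)\<^sup>2"
    using zero_le_power2[of "a - b"] by (simp add: power2_eq_square algebra_simps)
  then show "w\<^sup>2 \<le> (a + b)\<^sup>2" using assms(1) by linarith
qed (use assms in simp)

context preconditioned_laplacian
begin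

lemma p_ge_Min:
  assumes "i < n"
  shows "lam + mu * Min (eta ` {..<n}) \<le> p i"
proof -
  have "mu * Min (eta ` {..<n}) \<le> mu * eta i"
    using Min_eta_le[OF assms] mu_pos by (intro mult_left_mono) auto
  moreover have "lam + mu * eta i \<le> p i" using p_ge assms by simp
  ultimately show ?thesis by linarith
qed

lemma sum_inverse_p_le: "lam\<^sup>2 * (\<Sum>i<n. 1 / p i) \<le> lam / (lam + mu * Min (eta ` {..<n})) * lam * real n"
proof -
  have den: "0 < lam + mu * Min (eta ` {..<n})"
    using lam_pos mu_pos Min_eta_pos by (simp add: add_pos_pos)
  have "(\<Sum>i<n. 1 / p i) \<le> (\<Sum>i<n. 1 / (lam + mu * Min (eta ` {..<n})))"
    using p_ge_Min den p_pos by (intro sum_mono divide_left_mono) (auto intro: mult_pos_pos)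
  then have "lam\<^sup>2 * (\<Sum>i<n. 1 / p i) \<le> lam\<^sup>2 * (real n / (lam + mu * Min (eta ` {..<n})))"
    by (intro mult_left_mono) auto
  then show ?thesis by (simp add: power2_eq_square)
qed

lemma mulv_B_scaled:
  assumes "i < n"
  shows "mulv n B (\<lambda>j. sqrt (p j) * x j) i = mulv n A x i / sqrt (p i)"
proof -
  have "mulv n A (\<lambda>j. sqrt (p j) * x j / sqrt (p j)) i = mulv n A x i"
    using sqrt_p_pos by (intro mulv_cong) (simp add: less_imp_neq[THEN not_sym])
  then show ?thesis unfolding mulv_B[OF assms] by simp
qed

lemma quadratic_form_B_scaled:
  "dot n (\<lambda>j. sqrt (p j) * x j) (mulv n B (\<lambda>j. sqrt (p j) * x j)) = dot n x (mulv n A x)"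
  unfolding dot_def using sqrt_p_pos by (intro sum.cong refl) (simp add: mulv_B_scaled p_nonzero)

lemma norm_mulv_B_scaled:
  "dot n (mulv n B (\<lambda>j. sqrt (p j) * x j)) (mulv n B (\<lambda>j. sqrt (p j) * x j))
    = (\<Sum>i<n. (mulv n A x i)\<^sup>2 / p i)"
  unfolding dot_def
proof (intro sum.cong refl)
  fix i assume "i \<in> {..<n}"
  then have "0 < p i" using p_pos by simp
  then show "mulv n B (\<lambda>j. sqrt (p j) * x j) i * mulv n B (\<lambda>j. sqrt (p j) * x j) i
      = (mulv n A x i)\<^sup>2 / p i"
    using \<open>i \<in> {..<n}\<close> by (simp add: mulv_B_scaled power2_eq_square)
qed

end

text \<open>\<open>\<theta>\<close> is an eigenvalue of \<open>\<pi>\<^sub>2(D\<^sub>X\<^sup>-\<^sup>1 A\<^sub>X)\<close> exactly when \<open>A y = P (\<beta> 1 + \<theta> y)\<close> for some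
  nonzero \<open>y\<close> with entries summing to zero.\<close>

locale deflated_eigenpair = preconditioned_laplacian +
  fixes theta :: real and y :: "nat \<Rightarrow> real" and beta :: real
  assumes y_nonzero: "\<exists>i<n. y i \<noteq> 0"
    and y_sum: "(\<Sum>i<n. y i) = 0"
    and eigen_eq: "\<And>i. i < n \<Longrightarrow> mulv n A y i = p i * (beta + theta * y i)"
begin

definition energy :: real where
  "energy = dot n y (mulv n A y)"

definition residual :: real where
  "residual = (\<Sum>i<n. (mulv n A y i)\<^sup>2 / p i)"

lemma energy_pos: "0 < energy"
  unfolding energy_def by (rule quadratic_form_A_pos[OF y_nonzero])

lemma sum_mulv_A_y: "(\<Sum>i<n. mulv n A y i) = 0"
  by (simp add: sum_mulv_A y_sum)

text \<open>Pairing \<open>A y = P (\<beta> 1 + \<theta> y)\<close> with \<open>A y\<close> itself: the \<open>\<beta>\<close>-term drops out because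
  \<open>A y\<close> sums to zero.\<close>

lemma residual_eq: "residual = theta * energy"
proof -
  have "residual = (\<Sum>i<n. mulv n A y i * (beta + theta * y i))"
    unfolding residual_def using p_nonzero by (intro sum.cong refl) (simp add: eigen_eq power2_eq_square)
  also have "\<dots> = beta * (\<Sum>i<n. mulv n A y i) + theta * energy"
    unfolding energy_def dot_def by (simp add: distrib_left sum.distrib sum_distrib_left mult_ac)
  finally show ?thesis by (simp add: sum_mulv_A_y)
qed

lemma residual_pos: "0 < residual"
proof -
  have "\<exists>i<n. mulv n A y i \<noteq> 0"
  proof (rule ccontr)
    assume "\<not> ?thesis"
    then have "energy = 0" unfolding energy_def dot_def by simp
    with energy_pos show False by simp
  qed
  then obtain i where i: "i < n" "mulv n A y i \<noteq> 0" by blast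
  then show ?thesis
    unfolding residual_def using p_pos by (intro sum_pos2[of _ i]) (auto intro: divide_nonneg_pos)
qed

lemma theta_pos: "0 < theta"
  using residual_eq residual_pos energy_pos by (simp add: zero_less_mult_iff)

lemma energy_B: "dot n (\<lambda>j. sqrt (p j) * y j) (mulv n B (\<lambda>j. sqrt (p j) * y j)) = energy"
  unfolding energy_def by (rule quadratic_form_B_scaled)

lemma residual_B: "dot n (mulv n B (\<lambda>j. sqrt (p j) * y j)) (mulv n B (\<lambda>j. sqrt (p j) * y j)) = residual"
  unfolding residual_def by (rule norm_mulv_B_scaled)

lemma spec_rad_C: "spec_rad C = spec_rad B" and alg_conn_C: "alg_conn C = alg_conn B"
  unfolding spec_rad_def alg_conn_def eig_list_C by simp_all

lemma theta_le_spec_rad_C: "theta \<le> spec_rad C"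
proof -
  have "theta * energy \<le> spec_rad B * energy"
    using psd_norm_mulv_le_spec_rad[OF psd_B, of "\<lambda>j. sqrt (p j) * y j"] n2
    unfolding energy_B residual_B residual_eq by simp
  then show ?thesis using energy_pos spec_rad_C by simp
qed

lemma theta_le_two: "theta \<le> 2"
  using theta_le_spec_rad_C spec_rad_C spec_rad_B_le by simp

text \<open>The lower bound comes from Courant--Fischer in the plane spanned by \<open>u = P\<^sup>1\<^sup>/\<^sup>2 y\<close> and
  \<open>P\<^sup>1\<^sup>/\<^sup>2 1\<close>: on \<open>a y + b 1\<close> the residual exceeds \<open>\<theta>\<close> times the energy at most by
  \<open>\<lambda> / (\<lambda> + \<mu> min \<eta>)\<close> times the energy, the cross term being handled by Cauchy--Schwarz.\<close>

lemma plane_residual_le: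
  defines "c \<equiv> lam / (lam + mu * Min (eta ` {..<n}))"
  shows "(\<Sum>i<n. (a * mulv n A y i + b * lam)\<^sup>2 / p i) \<le> (theta + c) * (a\<^sup>2 * energy + b\<^sup>2 * lam * real n)"
proof -
  define X where "X = (\<Sum>i<n. mulv n A y i / p i)"
  define S where "S = (\<Sum>i<n. 1 / p i)"
  have c_nonneg: "0 \<le> c"
    unfolding c_def using lam_pos mu_pos Min_eta_pos by simp
  have S_le: "lam\<^sup>2 * S \<le> c * lam * real n"
    unfolding S_def c_def by (rule sum_inverse_p_le)
  have "X\<^sup>2 \<le> residual * S"
  proof -
    have "X\<^sup>2 = (\<Sum>i<n. (mulv n A y i / sqrt (p i)) * (1 / sqrt (p i)))\<^sup>2"
      unfolding X_def using p_pos by (simp add: less_imp_le)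
    also have "\<dots> \<le> (\<Sum>i<n. (mulv n A y i / sqrt (p i))\<^sup>2) * (\<Sum>i<n. (1 / sqrt (p i))\<^sup>2)"
      by (rule Cauchy_Schwarz_ineq_sum)
    also have "\<dots> = residual * S"
      unfolding residual_def S_def using p_pos by (simp add: power_divide less_imp_le)
    finally show ?thesis .
  qed
  then have "X\<^sup>2 * lam\<^sup>2 \<le> residual * S * lam\<^sup>2"
    by (rule mult_right_mono) simp
  then have "(lam * X)\<^sup>2 \<le> theta * energy * (lam\<^sup>2 * S)"
    by (simp add: power_mult_distrib residual_eq mult_ac)
  also have "\<dots> \<le> theta * energy * (c * lam * real n)"
    using S_le theta_pos energy_pos by (intro mult_left_mono) auto
  finally have "4 * (a\<^sup>2 * b\<^sup>2) * (lam * X)\<^sup>2 \<le> 4 * (a\<^sup>2 * b\<^sup>2) * (theta * energy * (c * lam * real n))"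
    by (rule mult_left_mono) simp
  then have "(2 * a * b * lam * X)\<^sup>2 \<le> 4 * (c * a\<^sup>2 * energy) * (theta * b\<^sup>2 * lam * real n)"
    by (simp add: power_mult_distrib mult_ac)
  then have cross: "2 * a * b * lam * X \<le> c * a\<^sup>2 * energy + theta * b\<^sup>2 * lam * real n"
    using c_nonneg energy_pos theta_pos lam_pos by (intro le_add_if_square_le_four_mult) auto
  have "(\<Sum>i<n. (a * mulv n A y i + b * lam)\<^sup>2 / p i) = a\<^sup>2 * residual + 2 * a * b * lam * X + b\<^sup>2 * (lam\<^sup>2 * S)"
    unfolding residual_def X_def S_def
    by (simp add: power2_eq_square algebra_simps add_divide_distrib sum.distrib sum_distrib_left)
  also have "\<dots> \<le> a\<^sup>2 * residual + (c * a\<^sup>2 * energy + theta * b\<^sup>2 * lam * real n) + b\<^sup>2 * (c * lam * real n)"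
    using cross S_le by (intro add_mono mult_left_mono) auto
  also have "\<dots> = (theta + c) * (a\<^sup>2 * energy + b\<^sup>2 * lam * real n)"
    by (simp add: residual_eq algebra_simps)
  finally show ?thesis .
qed

lemma alg_conn_C_le: "alg_conn C - lam / (lam + mu * Min (eta ` {..<n})) \<le> theta"
proof -
  define c where "c = lam / (lam + mu * Min (eta ` {..<n}))"
  obtain t where "\<exists>a b. (a \<noteq> 0 \<or> b \<noteq> 0) \<and> t = (\<lambda>i. a * (sqrt (p i) * y i) + b * sqrt (p i))"
    and "alg_conn B * dot n t t \<le> dot n t (mulv n B t)"
    and ineq: "alg_conn B * dot n t (mulv n B t) \<le> dot n (mulv n B t) (mulv n B t)"
    by (rule psd_alg_conn_le_in_plane[OF psd_B n2])
  then obtain a b where ab: "a \<noteq> 0 \<or> b \<noteq> 0"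
    and t: "t = (\<lambda>j. sqrt (p j) * (a * y j + b))"
    by (auto simp: algebra_simps)
  have Aw: "mulv n A (\<lambda>j. a * y j + b) i = a * mulv n A y i + b * lam" if "i < n" for i
    using mulv_linear[of n A a y b "\<lambda>_. 1" i] mulv_A_const[OF that] by simp
  have "dot n t (mulv n B t) = (\<Sum>i<n. (a * y i + b) * (a * mulv n A y i + b * lam))"
    unfolding t quadratic_form_B_scaled unfolding dot_def by (intro sum.cong refl) (simp add: Aw)
  also have "\<dots> = a\<^sup>2 * energy + b\<^sup>2 * lam * real n"
    unfolding energy_def dot_def
    by (simp add: algebra_simps power2_eq_square sum.distrib sum_distrib_left[symmetric]
        sum_mulv_A_y y_sum)
  finally have T1: "dot n t (mulv n B t) = a\<^sup>2 * energy + b\<^sup>2 * lam * real n" .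
  have T1_pos: "0 < dot n t (mulv n B t)"
    unfolding T1 using ab energy_pos lam_pos n2
    by (auto intro: add_pos_nonneg add_nonneg_pos simp: zero_less_mult_iff)
  have "dot n (mulv n B t) (mulv n B t) = (\<Sum>i<n. (a * mulv n A y i + b * lam)\<^sup>2 / p i)"
    unfolding t norm_mulv_B_scaled by (intro sum.cong refl) (simp only: Aw lessThan_iff)
  also have "\<dots> \<le> (theta + c) * dot n t (mulv n B t)"
    unfolding T1 c_def by (rule plane_residual_le)
  finally have "alg_conn B * dot n t (mulv n B t) \<le> (theta + c) * dot n t (mulv n B t)"
    using ineq by linarith
  then show ?thesis
    using T1_pos alg_conn_C unfolding c_def by simp
qed

lemma theta_le_laplacian_ratio: "theta \<le> spec_rad L / Min (eta ` {..<n})"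
proof -
  define m where "m = Min (eta ` {..<n})"
  have m_pos: "0 < m" and den: "0 < lam + mu * m"
    unfolding m_def using Min_eta_pos lam_pos mu_pos by (auto intro: add_pos_pos)
  have "theta * energy = residual" by (simp add: residual_eq)
  also have "\<dots> \<le> (\<Sum>i<n. (mulv n A y i)\<^sup>2 / (lam + mu * m))"
    unfolding residual_def using p_ge_Min p_pos den unfolding m_def
    by (intro sum_mono divide_left_mono) (auto intro: mult_pos_pos)
  also have "\<dots> \<le> (lam + mu * spec_rad L) / (lam + mu * m) * energy"
    using norm_mulv_A_le[of y] den unfolding energy_def
    by (simp add: sum_divide_distrib[symmetric] divide_right_mono)
  finally have "theta * energy \<le> (lam + mu * spec_rad L) / (lam + mu * m) * energy" .
  then have "theta \<le> (lam + mu * spec_rad L) / (lam + mu * m)"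
    using energy_pos by (rule mult_right_le_imp_le)
  also have "\<dots> \<le> spec_rad L / m"
    using Min_eta_le_spec_rad_L m_pos den lam_pos unfolding m_def[symmetric]
    by (simp add: divide_le_eq le_divide_eq algebra_simps mult_left_mono)
  finally show ?thesis unfolding m_def .
qed

end

section \<open>Deflating changes of basis\<close>

definition deflating_basis :: "nat \<Rightarrow> real mat \<Rightarrow> bool" where
  "deflating_basis n X \<longleftrightarrow> X \<in> carrier_mat n n \<and> (\<exists>Y \<in> carrier_mat n n. Y * X = 1\<^sub>m n)
    \<and> (\<forall>i<n. X $$ (i, 0) = X $$ (0, 0)) \<and> (\<forall>j. 0 < j \<and> j < n \<longrightarrow> (\<Sum>i<n. X $$ (i, j)) = 0)"

lemma Qmat_column_sum: "0 < j \<Longrightarrow> j < n \<Longrightarrow> (\<Sum>i<n. Qmat n $$ (i, j)) = 0"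
proof -
  assume j: "0 < j" "j < n"
  then have "(\<Sum>i<n. Qmat n $$ (i, j)) = (\<Sum>i<n. (if i = 0 then 1 else 0) + (if i = j then -1 else 0))"
    by (intro sum.cong refl) (auto simp: Qmat_def)
  then show ?thesis using j by (simp add: sum.distrib)
qed

lemma deflating_basis_Qmat:
  assumes n: "0 < n"
  shows "deflating_basis n (Qmat n)"
proof -
  define Y where "Y = mat n n (\<lambda>(i, j). 1 / real n - (if 0 < i \<and> i = j then 1 else 0))"
  have col_sum: "(\<Sum>k<n. Qmat n $$ (k, j)) = (if j = 0 then real n else 0)" if "j < n" for j
    using that Qmat_column_sum[of j n] by (auto simp: Qmat_def)
  have "Y * Qmat n = 1\<^sub>m n"
  proof (rule eq_matI)
    fix i j assume "i < dim_row (1\<^sub>m n)" "j < dim_col (1\<^sub>m n)"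
    then have ij: "i < n" "j < n" by auto
    have "(Y * Qmat n) $$ (i, j) = (\<Sum>k<n. Qmat n $$ (k, j)) / real n
        - (if 0 < i then Qmat n $$ (i, j) else 0)"
      using ij by (simp add: Y_def Qmat_def scalar_prod_def atLeast0LessThan left_diff_distrib
          sum_subtractf sum_divide_distrib if_distrib[of "\<lambda>a. a * _"] cong: if_cong)
    then show "(Y * Qmat n) $$ (i, j) = 1\<^sub>m n $$ (i, j)"
      using ij n col_sum[OF ij(2)] by (auto simp: Qmat_def)
  qed (auto simp: Y_def Qmat_def)
  moreover have "Y \<in> carrier_mat n n" "Qmat n \<in> carrier_mat n n"
    unfolding Y_def Qmat_def by auto
  ultimately show ?thesis
    unfolding deflating_basis_def using Qmat_column_sum by (auto simp: Qmat_def)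
qed

lemma sum_staircase:
  assumes "j < n"
  shows "(\<Sum>i<n. if i < j then a else if i = j then b else 0) = real j * a + (b :: real)"
proof -
  have "(\<Sum>i<n. if i < j then a else if i = j then b else 0) = (\<Sum>i<Suc j. if i < j then a else if i = j then b else 0)"
    using assms by (intro sum.mono_neutral_right) auto
  then show ?thesis by simp
qed

lemma Umat_entry:
  "i < n \<Longrightarrow> 0 < j \<Longrightarrow> j < n \<Longrightarrow>
    Umat n $$ (i, j) = (if i < j then 1 else if i = j then - real j else 0) / sqrt (real (j + 1) * real j)"
  unfolding Umat_def Let_def by simp

lemma Umat_column_sum:
  assumes "0 < j" "j < n"
  shows "(\<Sum>i<n. Umat n $$ (i, j)) = 0"
proof -
  have "(\<Sum>i<n. Umat n $$ (i, j)) = (\<Sum>i<n. if i < j then 1 else if i = j then - real j else 0)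
      / sqrt (real (j + 1) * real j)"
    using assms by (simp add: Umat_entry sum_divide_distrib)
  then show ?thesis using sum_staircase[OF assms(2)] by simp
qed

text \<open>Column \<open>b \<ge> 1\<close> of \<open>U\<close> is constant on the support \<open>{0..a}\<close> of every earlier column \<open>a < b\<close>,
  so orthogonality reduces to the vanishing column sums.\<close>

lemma Umat_orthogonal:
  assumes ab: "a < b" "b < n"
  shows "(\<Sum>i<n. Umat n $$ (i, a) * Umat n $$ (i, b)) = 0"
proof (cases "a = 0")
  case True
  then have "(\<Sum>i<n. Umat n $$ (i, a) * Umat n $$ (i, b)) = 1 / sqrt (real n) * (\<Sum>i<n. Umat n $$ (i, b))"
    unfolding sum_distrib_left by (intro sum.cong refl) (simp add: Umat_def)
  then show ?thesis using Umat_column_sum[of b n] ab by simp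
next
  case False
  have "Umat n $$ (i, a) * Umat n $$ (i, b) = Umat n $$ (i, a) * Umat n $$ (0, b)" if "i < n" for i
  proof (cases "i \<le> a")
    case True
    then show ?thesis using ab that False by (simp add: Umat_entry)
  next
    case False
    then show ?thesis using ab that \<open>a \<noteq> 0\<close> by (simp add: Umat_entry)
  qed
  then have "(\<Sum>i<n. Umat n $$ (i, a) * Umat n $$ (i, b)) = (\<Sum>i<n. Umat n $$ (i, a)) * Umat n $$ (0, b)"
    unfolding sum_distrib_right by (intro sum.cong refl) simp
  then show ?thesis using Umat_column_sum[of a n] ab False by simp
qed

lemma Umat_normal:
  assumes "a < n"
  shows "(\<Sum>i<n. Umat n $$ (i, a) * Umat n $$ (i, a)) = 1"
proof (cases "a = 0")
  case True
  then show ?thesis using assms by (simp add: Umat_def)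
next
  case False
  then have "(\<Sum>i<n. Umat n $$ (i, a) * Umat n $$ (i, a))
      = (\<Sum>i<n. if i < a then 1 else if i = a then real a * real a else 0) / (real (a + 1) * real a)"
    using assms by (simp add: Umat_entry sum_divide_distrib if_distrib[of "\<lambda>x. x * _"] cong: if_cong)
  also have "\<dots> = 1"
  proof -
    have "0 < real a + real a * real a" using False by (simp add: add_pos_nonneg)
    then show ?thesis unfolding sum_staircase[OF assms] by (simp add: field_simps)
  qed
  finally show ?thesis .
qed

lemma deflating_basis_Umat: "deflating_basis n (Umat n)"
proof -
  have "transpose_mat (Umat n) * Umat n = 1\<^sub>m n"
  proof (rule eq_matI)
    fix a b assume "a < dim_row (1\<^sub>m n)" "b < dim_col (1\<^sub>m n)"
    then have ab: "a < n" "b < n" by auto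
    have "(transpose_mat (Umat n) * Umat n) $$ (a, b) = (\<Sum>i<n. Umat n $$ (i, a) * Umat n $$ (i, b))"
      using ab by (simp add: Umat_def scalar_prod_def atLeast0LessThan)
    also have "\<dots> = 1\<^sub>m n $$ (a, b)"
      using ab Umat_normal Umat_orthogonal[of a b] Umat_orthogonal[of b a]
      by (cases a b rule: linorder_cases) (auto simp: mult.commute)
    finally show "(transpose_mat (Umat n) * Umat n) $$ (a, b) = 1\<^sub>m n $$ (a, b)" .
  qed (auto simp: Umat_def)
  then show ?thesis
    unfolding deflating_basis_def using Umat_column_sum
    by (auto simp: Umat_def intro!: bexI[of _ "transpose_mat (Umat n)"])
qed

lemma pi2_eigenvector_padded:
  fixes z :: complex
  assumes T: "T \<in> carrier_mat n n" and ev: "eigenvalue (map_mat complex_of_real (pi2 T)) z"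
  obtains x where "x 0 = 0" "\<exists>j<n. x j \<noteq> 0" "\<And>k. 0 < k \<Longrightarrow> k < n \<Longrightarrow> cmulv n T x k = z * x k"
proof -
  define m where "m = n - 1"
  have dim: "map_mat complex_of_real (pi2 T) \<in> carrier_mat m m"
    using T unfolding pi2_def m_def by simp
  then have "0 < m" using eigenvalue_imp_nonzero_dim ev by blast
  then have nm: "n = Suc m" unfolding m_def by simp
  obtain v where v: "v \<in> carrier_vec m" "v \<noteq> 0\<^sub>v m"
    "map_mat complex_of_real (pi2 T) *\<^sub>v v = z \<cdot>\<^sub>v v"
    using ev dim unfolding eigenvalue_def eigenvector_def by auto
  define x where "x = (\<lambda>j. if j = 0 then 0 else v $ (j - 1))"
  obtain i where "i < m" "v $ i \<noteq> 0"
    using v(1,2) by (metis carrier_vecD eq_vecI index_zero_vec(1,2))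
  then have "\<exists>j<n. x j \<noteq> 0" using nm by (intro exI[of _ "Suc i"]) (simp add: x_def)
  moreover have "cmulv n T x k = z * x k" if k: "0 < k" "k < n" for k
  proof -
    obtain i where k: "k = Suc i" and i: "i < m" using k nm by (cases k) auto
    have "(map_mat complex_of_real (pi2 T) *\<^sub>v v) $ i = (z \<cdot>\<^sub>v v) $ i" using v(3) by simp
    then have "(\<Sum>j<m. complex_of_real (T $$ (Suc i, Suc j)) * v $ j) = z * v $ i"
      using i v(1) T unfolding pi2_def m_def by (simp add: scalar_prod_def atLeast0LessThan)
    then show ?thesis
      unfolding cmulv_def nm sum.lessThan_Suc_shift by (simp add: x_def k)
  qed
  ultimately show thesis using that[of x] by (simp add: x_def)
qed

text \<open>An eigenvector of \<open>\<pi>\<^sub>2(T)\<close>, padded by a leading zero, is an eigenvector of \<open>T\<close> up to a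
  multiple of \<open>e\<^sub>1\<close>; mapped by \<open>X\<close>, whose first column is constant, it becomes an eigenvector
  of \<open>C\<close> up to a multiple of \<open>1\<close>, and it sums to zero because the other columns of \<open>X\<close> do.\<close>

lemma deflating_basis_eigenvector:
  fixes z :: complex
  assumes X: "deflating_basis n X" and T: "T \<in> carrier_mat n n" and C: "C \<in> carrier_mat n n"
    and XT: "X * T = C * X"
    and ev: "eigenvalue (map_mat complex_of_real (pi2 T)) z"
  obtains y beta where "\<exists>i<n. y i \<noteq> 0" "(\<Sum>i<n. y i) = 0"
    "\<And>i. i < n \<Longrightarrow> cmulv n C y i = beta + z * y i"
proof -
  obtain Y where X_carrier: "X \<in> carrier_mat n n" and Y: "Y \<in> carrier_mat n n" "Y * X = 1\<^sub>m n"
    and col0: "\<And>i. i < n \<Longrightarrow> X $$ (i, 0) = X $$ (0, 0)"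
    and col_sum: "\<And>j. 0 < j \<Longrightarrow> j < n \<Longrightarrow> (\<Sum>i<n. X $$ (i, j)) = 0"
    using X unfolding deflating_basis_def by blast
  obtain x where x0: "x 0 = 0" and x_nonzero: "\<exists>j<n. x j \<noteq> 0"
    and Tx: "\<And>k. 0 < k \<Longrightarrow> k < n \<Longrightarrow> cmulv n T x k = z * x k"
    using pi2_eigenvector_padded[OF T ev] by blast
  define y where "y = cmulv n X x"
  have "cmulv n C y i = complex_of_real (X $$ (0, 0)) * cmulv n T x 0 + z * y i" if i: "i < n" for i
  proof -
    have "cmulv n C y i = cmulv n X (cmulv n T x) i"
      unfolding y_def using cmulv_mult[OF C X_carrier i] cmulv_mult[OF X_carrier T i] XT by simp
    also have "\<dots> = cmulv n X (\<lambda>k. z * x k + (if k = 0 then cmulv n T x 0 else 0)) i"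
      unfolding cmulv_def[of n X] using Tx x0 by (intro sum.cong refl) auto
    also have "\<dots> = z * y i + complex_of_real (X $$ (i, 0)) * cmulv n T x 0"
      using i unfolding y_def cmulv_def
      by (simp add: distrib_left sum.distrib sum_distrib_left if_distrib[of "\<lambda>a. _ * a"] mult_ac
          cong: if_cong)
    finally show ?thesis using col0[OF i] by simp
  qed
  moreover have "(\<Sum>i<n. y i) = 0"
  proof -
    have "(\<Sum>i<n. y i) = (\<Sum>j<n. complex_of_real (\<Sum>i<n. X $$ (i, j)) * x j)"
      unfolding y_def cmulv_def by (subst sum.swap) (simp add: sum_distrib_right)
    also have "\<dots> = 0"
    proof (intro sum.neutral ballI)
      fix j assume "j \<in> {..<n}"
      then show "complex_of_real (\<Sum>i<n. X $$ (i, j)) * x j = 0"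
        using col_sum[of j] x0 by (cases "j = 0") auto
    qed
    finally show ?thesis .
  qed
  moreover have "\<exists>i<n. y i \<noteq> 0"
  proof (rule ccontr)
    assume "\<not> ?thesis"
    then have "x j = 0" if "j < n" for j
      using cmulv_mult[OF Y(1) X_carrier that, of x] Y(2) that
      by (simp add: cmulv_one y_def cmulv_def[of _ Y])
    then show False using x_nonzero by blast
  qed
  ultimately show thesis using that by blast
qed

context preconditioned_laplacian
begin

lemma mat_inv_P_mult_A: "mat_inv (diag_of n p) * A = C"
proof -
  have "mat_inv (diag_of n p) = diag_of n (\<lambda>i. 1 / p i)"
    by (rule diag_of_inverse) (rule p_nonzero)
  then show ?thesis unfolding C_def by (simp add: diag_of_mult[OF A_carrier])
qed

lemma deflated_eigenvalue_real:
  fixes y :: "nat \<Rightarrow> complex" and beta z :: complex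
  assumes nonzero: "\<exists>i<n. y i \<noteq> 0" and sum_zero: "(\<Sum>i<n. y i) = 0"
    and eigen: "\<And>i. i < n \<Longrightarrow> cmulv n A y i = complex_of_real (p i) * (beta + z * y i)"
  shows "Im z = 0"
proof -
  define w where "w = cmulv n A y"
  define re im where "re i = Re (y i)" and "im i = Im (y i)" for i
  have "(\<Sum>i<n. w i) = (\<Sum>j<n. complex_of_real (\<Sum>i<n. A $$ (i, j)) * y j)"
    unfolding w_def cmulv_def by (subst sum.swap) (simp add: sum_distrib_right)
  then have w_sum: "(\<Sum>i<n. w i) = 0"
    using sum_zero by (simp add: A_column_sum flip: sum_distrib_left)
  define r where "r = dot n re (mulv n A re) + dot n im (mulv n A im)"
  have H: "(\<Sum>i<n. cnj (y i) * w i) = complex_of_real r"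
    unfolding w_def r_def re_def im_def by (rule hermitian_form_of_sym_mat[OF sym_mat_A])
  have "0 < r"
  proof -
    obtain i where i: "i < n" "y i \<noteq> 0" using nonzero by blast
    then have "re i \<noteq> 0 \<or> im i \<noteq> 0" unfolding re_def im_def using complex_eqI by force
    then show ?thesis
      unfolding r_def using i(1) psd_A unfolding psd_def
      by (auto intro: add_pos_nonneg add_nonneg_pos quadratic_form_A_pos)
  qed
  have "(\<Sum>i<n. cnj (w i) * (beta + z * y i)) = complex_of_real (\<Sum>i<n. (cmod (w i))\<^sup>2 / p i)"
    unfolding of_real_sum
  proof (intro sum.cong refl)
    fix i assume "i \<in> {..<n}"
    then have "beta + z * y i = w i / complex_of_real (p i)"
      using eigen p_nonzero unfolding w_def by (simp add: field_simps)
    moreover have "cnj (w i) * w i = complex_of_real ((cmod (w i))\<^sup>2)"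
      by (metis complex_norm_square mult.commute)
    ultimately show "cnj (w i) * (beta + z * y i) = complex_of_real ((cmod (w i))\<^sup>2 / p i)"
      by (simp add: mult.assoc[symmetric])
  qed
  moreover have "(\<Sum>i<n. cnj (w i) * (beta + z * y i)) = beta * cnj (\<Sum>i<n. w i) + z * cnj (complex_of_real r)"
    unfolding H[symmetric] by (simp add: distrib_left sum.distrib sum_distrib_left mult_ac)
  ultimately have "Im (z * complex_of_real r) = 0"
    using w_sum by (metis Im_complex_of_real add_0 complex_cnj_complex_of_real complex_cnj_zero mult_zero_right)
  then show ?thesis using \<open>0 < r\<close> by simp
qed

lemma deflated_complex_eigenvector:
  fixes z :: complex
  assumes X: "deflating_basis n X"
    and ev: "eigenvalue (map_mat complex_of_real (pi2 (mat_inv X * C * X))) z"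
  obtains y beta where "\<exists>i<n. y i \<noteq> 0" "(\<Sum>i<n. y i) = 0"
    "\<And>i. i < n \<Longrightarrow> cmulv n A y i = complex_of_real (p i) * (beta + z * y i)"
proof -
  obtain Y where X_carrier: "X \<in> carrier_mat n n" and Y: "Y \<in> carrier_mat n n" "Y * X = 1\<^sub>m n"
    using X unfolding deflating_basis_def by blast
  note XY = mat_inv_left_inverse[OF X_carrier Y]
  have C_carrier: "C \<in> carrier_mat n n" unfolding C_def by simp
  have "X * (Y * C * X) = (X * Y) * C * X"
    using Y C_carrier X_carrier by (simp add: assoc_mult_mat[of _ n n _ n _ n] mult_carrier_mat[of _ n n _ n])
  then have XT: "X * (Y * C * X) = C * X" using XY C_carrier by simp
  have T: "Y * C * X \<in> carrier_mat n n" using Y(1) C_carrier X_carrier by simp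
  obtain y beta where y: "\<exists>i<n. y i \<noteq> 0" "(\<Sum>i<n. y i) = 0"
    and Cy: "\<And>i. i < n \<Longrightarrow> cmulv n C y i = beta + z * y i"
    using deflating_basis_eigenvector[OF X T C_carrier XT ev[unfolded XY(1)]] by blast
  have "cmulv n A y i = complex_of_real (p i) * (beta + z * y i)" if "i < n" for i
    using Cy[OF that, symmetric] that p_nonzero by (simp add: cmulv_def C_def sum_distrib_left field_simps)
  with y show thesis by (rule that)
qed

lemma real_deflated_eigenpair:
  fixes y :: "nat \<Rightarrow> complex"
  assumes nonzero: "\<exists>i<n. y i \<noteq> 0" and sum_zero: "(\<Sum>i<n. y i) = 0"
    and eigen: "\<And>i. i < n \<Longrightarrow> cmulv n A y i = complex_of_real (p i) * (beta + complex_of_real theta * y i)"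
  obtains y' beta' where "deflated_eigenpair n G eta L lam mu A p theta y' beta'"
proof -
  have re: "mulv n A (\<lambda>j. Re (y j)) i = p i * (Re beta + theta * Re (y i))"
    and im: "mulv n A (\<lambda>j. Im (y j)) i = p i * (Im beta + theta * Im (y i))" if "i < n" for i
    using arg_cong[OF eigen[OF that], of Re] arg_cong[OF eigen[OF that], of Im]
    by (simp_all add: Re_cmulv Im_cmulv)
  have sums: "(\<Sum>i<n. Re (y i)) = 0" "(\<Sum>i<n. Im (y i)) = 0"
    using arg_cong[OF sum_zero, of Re] arg_cong[OF sum_zero, of Im] by (simp_all add: Re_sum Im_sum)
  obtain i where "i < n" "y i \<noteq> 0" using nonzero by blast
  then consider "\<exists>i<n. Re (y i) \<noteq> 0" | "\<exists>i<n. Im (y i) \<noteq> 0" using complex_eqI by force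
  then show thesis
  proof cases
    case 1
    then have "deflated_eigenpair n G eta L lam mu A p theta (\<lambda>i. Re (y i)) (Re beta)"
      using re sums(1) by unfold_locales auto
    then show thesis by (rule that)
  next
    case 2
    then have "deflated_eigenpair n G eta L lam mu A p theta (\<lambda>i. Im (y i)) (Im beta)"
      using im sums(2) by unfold_locales auto
    then show thesis by (rule that)
  qed
qed

theorem deflated_spectrum:
  assumes X: "deflating_basis n X"
  defines "M \<equiv> pi2 (mat_inv X * C * X)"
  shows "(\<forall>z. eigenvalue (map_mat complex_of_real M) z \<longrightarrow> Im z = 0)
    \<and> (\<forall>\<theta>. eigenvalue M \<theta> \<longrightarrow> \<theta> > 0)
    \<and> (\<forall>\<theta>. eigenvalue M \<theta> \<longrightarrow>
          alg_conn C - lam / (lam + mu * Min (eta ` {..<n})) \<le> \<theta>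
          \<and> \<theta> \<le> spec_rad C
          \<and> \<theta> \<le> min 2 (real n / (real n - 1) * (spec_rad L / alg_conn L)))"
proof -
  have "Im z = 0" if ev: "eigenvalue (map_mat complex_of_real M) z" for z
  proof -
    obtain y beta where "\<exists>i<n. y i \<noteq> 0" "(\<Sum>i<n. y i) = 0"
      "\<And>i. i < n \<Longrightarrow> cmulv n A y i = complex_of_real (p i) * (beta + z * y i)"
      using deflated_complex_eigenvector[OF X ev[unfolded M_def]] by blast
    then show ?thesis by (rule deflated_eigenvalue_real)
  qed
  moreover have "0 < \<theta> \<and> alg_conn C - lam / (lam + mu * Min (eta ` {..<n})) \<le> \<theta> \<and> \<theta> \<le> spec_rad C
      \<and> \<theta> \<le> min 2 (real n / (real n - 1) * (spec_rad L / alg_conn L))"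
    if "eigenvalue M \<theta>" for \<theta>
  proof -
    obtain Y where "X \<in> carrier_mat n n" "Y \<in> carrier_mat n n" "Y * X = 1\<^sub>m n"
      using X unfolding deflating_basis_def by blast
    then have "M \<in> carrier_mat (n - 1) (n - 1)"
      unfolding M_def pi2_def mat_inv_left_inverse(1)[OF \<open>X \<in> carrier_mat n n\<close> \<open>Y \<in> carrier_mat n n\<close> \<open>Y * X = 1\<^sub>m n\<close>]
      by simp
    then have "eigenvalue (map_mat complex_of_real M) (complex_of_real \<theta>)"
      using that eigenvalue_of_real_iff by blast
    then obtain y beta where "\<exists>i<n. y i \<noteq> 0" "(\<Sum>i<n. y i) = 0"
      "\<And>i. i < n \<Longrightarrow> cmulv n A y i = complex_of_real (p i) * (beta + complex_of_real \<theta> * y i)"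
      unfolding M_def using deflated_complex_eigenvector[OF X] by blast
    then obtain y' beta' where "deflated_eigenpair n G eta L lam mu A p \<theta> y' beta'"
      using real_deflated_eigenpair by blast
    then interpret deflated_eigenpair n G eta L lam mu A p \<theta> y' beta' .
    show ?thesis
      using theta_pos alg_conn_C_le theta_le_spec_rad_C theta_le_two theta_le_laplacian_ratio
        spec_rad_div_Min_eta_le by auto
  qed
  ultimately show ?thesis by blast
qed

end

theorem lemma4p11:
  fixes n :: nat and G :: "real mat" and lam mu :: real and P X :: "real mat"
  assumes n2: "n \<ge> 2"
    and G_carrier: "G \<in> carrier_mat n n"
    and G_sym: "\<forall>i<n. \<forall>j<n. G $$ (i, j) = G $$ (j, i)"
    and G_range: "\<forall>i<n. \<forall>j<n. 0 \<le> G $$ (i, j) \<and> G $$ (i, j) \<le> 1"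
    and G_diag: "\<forall>i<n. G $$ (i, i) = 0"
    and G_rows: "\<forall>i<n. \<exists>j<n. j \<noteq> i \<and> G $$ (i, j) > 0"
    and G_conn: "weighted_connected n G"
    and lam: "lam > 0" and mu: "mu > 0"
    and eta_def: "eta = (\<lambda>i. \<Sum>j<n. G $$ (i, j))"
    and L_def: "L = diag_of n eta - G"
    and A_def: "A = lam \<cdot>\<^sub>m 1\<^sub>m n + mu \<cdot>\<^sub>m L"
    and P_choice: "P = diag_of n (\<lambda>i. lam + mu * eta i)
                   \<or> P = diag_of n (\<lambda>i. sqrt (\<Sum>j<n. (A $$ (i, j))\<^sup>2))"
    and X_choice: "X = Qmat n \<or> X = Umat n"
    and AX_def: "AX = mat_inv X * A * X"
    and DX_def: "DX = mat_inv X * P * X"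
    and M_def: "M = pi2 (mat_inv DX * AX)"
  shows "(\<forall>z. eigenvalue (map_mat complex_of_real M) z \<longrightarrow> Im z = 0)
    \<and> (\<forall>\<theta>. eigenvalue M \<theta> \<longrightarrow> \<theta> > 0)
    \<and> (\<forall>\<theta>. eigenvalue M \<theta> \<longrightarrow>
          alg_conn (mat_inv P * A) - lam / (lam + mu * Min (eta ` {..<n})) \<le> \<theta>
          \<and> \<theta> \<le> spec_rad (mat_inv P * A)
          \<and> \<theta> \<le> min 2 (real n / (real n - 1) * (spec_rad L / alg_conn L)))"
proof -
  interpret regularized_laplacian n G eta L lam mu A
  proof
    show "\<forall>i<n. \<forall>j<n. 0 \<le> G $$ (i, j)" using G_range by simp
  qed (fact assms)+
  obtain p where P: "P = diag_of n p" and p_ge: "\<forall>i<n. lam + mu * eta i \<le> p i"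
    using diagonal_preconditioner[OF P_choice] .
  interpret preconditioned_laplacian n G eta L lam mu A p
    using p_ge by unfold_locales
  have X: "deflating_basis n X"
    using X_choice n2 deflating_basis_Qmat deflating_basis_Umat by auto
  then obtain Y where X_carrier: "X \<in> carrier_mat n n" and Y: "Y \<in> carrier_mat n n" "Y * X = 1\<^sub>m n"
    unfolding deflating_basis_def by blast
  have "mat_inv (mat_inv X * P * X) * (mat_inv X * A * X) = mat_inv X * C * X"
    unfolding P mat_inv_P_mult_A[symmetric]
    by (rule mat_inv_conjugate_mult[OF X_carrier Y diag_of_carrier diag_of_carrier
          diag_of_left_inverse[of n p, OF p_nonzero] A_carrier])
  then have "M = pi2 (mat_inv X * C * X)"
    unfolding M_def AX_def DX_def by simp
  then show ?thesis
    using deflated_spectrum[OF X] unfolding P mat_inv_P_mult_A by simp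
qed

end
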